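(* We have $$\{g\in G(A(\!(t)\!))\mid r(g)\le 0\}=\{g\in G(A(\!(t)\!))\mid g^{-1}\,g(\lambda t)\in G(A[\lambda,\lambda^{-1}][[t]])\},$$ where $g(\lambda t)$ is the image of $g$ under $A(\!(t)\!)\to A[\lambda,\lambda^{-1}](\!(t)\!)$, $t\mapsto\lambda t$.
   Context: Let $A$ be a commutative ring, $A[[t]]$ the power series ring and $A(\!(t)\!)=A[[t]][t^{-1}]$. For $n\ge1$ put $A[[t^{1/n}]]=A[[t]][y]/(y^n-t)$ and $A(\!(t^{1/n})\!)=A[[t^{1/n}]][t^{-1}]$. Let $A^u=A[u]$ be a polynomial ring. Every $r\in\mathbb{Q}_{\ge0}$ is written $r=m/n$ with $\gcd(m,n)=1$, $n\ge1$. Put $A_r=A^u[[t^{1/n}]]$ and $\mathcal{A}_r=A^u(\!(t^{1/n})\!)$. For $r\in\mathbb{Q}_{>0}$, let $\sigma_r:A(\!(t)\!)\to\mathcal{A}_r$ be the $t$-adically continuous $A$-algebra homomorphism with $t\mapsto t(1+ut^r)$. $\lambda$ is an indeterminate. Let $G$ be an affine $A$-group scheme with a closed embedding $G\hookrightarrow\mathrm{SL}_{N,A}$. For a ring map $\sigma$, $\sigma(g)$ denotes the image of $g$ under $G(\sigma)$. Index: if $g\in G(A[[t]])$, set $r(g)=-1$. Otherwise $r(g)\in\mathbb{Q}_{\ge0}$ is the infimum in $\mathbb{R}$ of $\{r\in\mathbb{Q}_{>0}\mid g^{-1}\sigma_r(g)\in G(A_r)\}$. *)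

theory Defs
  imports "Jordan_Normal_Form.Determinant"
          "HOL-Library.Poly_Mapping"
          "HOL-Library.Extended_Real"
          "HOL-Computational_Algebra.Formal_Laurent_Series"
          "HOL-Computational_Algebra.Polynomial"
begin

no_notation fls_nth (infixl \<open>$$\<close> 75)

type_synonym 'a mpoly = "(nat \<Rightarrow>\<^sub>0 nat) \<Rightarrow>\<^sub>0 'a"

text \<open>Evaluation of a polynomial with coefficients in A at a point of an A-algebra B,
  the A-algebra structure being given by phi.\<close>
definition mpoly_eval :: "('a::comm_ring_1 \<Rightarrow> 'b::comm_ring_1) \<Rightarrow> (nat \<Rightarrow> 'b) \<Rightarrow> 'a mpoly \<Rightarrow> 'b" where
  "mpoly_eval phi x p =
     (\<Sum>m\<in>Poly_Mapping.keys p. phi (Poly_Mapping.lookup p m) *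
        (\<Prod>i\<in>Poly_Mapping.keys m. x i ^ Poly_Mapping.lookup m i))"

definition mpoly_vars :: "'a::zero mpoly \<Rightarrow> nat set" where
  "mpoly_vars p = \<Union> (Poly_Mapping.keys ` Poly_Mapping.keys p)"

definition mvar :: "nat \<Rightarrow> 'a::comm_ring_1 mpoly" where
  "mvar k = Poly_Mapping.single (Poly_Mapping.single k 1) 1"

definition mconst :: "'a::comm_ring_1 \<Rightarrow> 'a mpoly" where
  "mconst c = Poly_Mapping.single 0 c"

definition ideal_gen :: "'b::comm_ring_1 set \<Rightarrow> 'b set" where
  "ideal_gen B = {x. \<exists>F c. finite F \<and> F \<subseteq> B \<and> x = (\<Sum>g\<in>F. c g * g)}"

text \<open>The entries of an N x N matrix as coordinates: variable i*N+j is entry (i,j).\<close>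
definition mat_coords :: "nat \<Rightarrow> 'b::zero mat \<Rightarrow> nat \<Rightarrow> 'b" where
  "mat_coords N M k = (if k < N * N then index_mat M (k div N, k mod N) else 0)"

text \<open>G is the closed subscheme of SL_N cut out by the polynomials I.  For an A-algebra B
  (structure map phi) and a subring S of B (S = UNIV for B itself), this is G(S).\<close>
definition group_points ::
  "nat \<Rightarrow> 'a::comm_ring_1 mpoly set \<Rightarrow> ('a \<Rightarrow> 'b::comm_ring_1) \<Rightarrow> 'b set \<Rightarrow> 'b mat set" where
  "group_points N I phi S =
     {M \<in> carrier_mat N N. (\<forall>i<N. \<forall>j<N. index_mat M (i, j) \<in> S) \<and> det M = 1 \<and>
        (\<forall>f\<in>I. mpoly_eval phi (mat_coords N M) f = 0)}"

definition genX :: "nat \<Rightarrow> 'a::comm_ring_1 mpoly mat" where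
  "genX N = mat N N (\<lambda>(i, j). mvar (i * N + j))"

definition genY :: "nat \<Rightarrow> 'a::comm_ring_1 mpoly mat" where
  "genY N = mat N N (\<lambda>(i, j). mvar (N * N + i * N + j))"

text \<open>I defines a closed subgroup scheme of SL_{N,A}: the coordinate ideal (I, det X - 1) is
  a Hopf ideal, i.e. unit, multiplication and inversion of SL_N restrict to G.\<close>
definition closed_subgroup_scheme_SL :: "nat \<Rightarrow> 'a::comm_ring_1 mpoly set \<Rightarrow> bool" where
  "closed_subgroup_scheme_SL N I \<longleftrightarrow>
     (\<forall>f\<in>I. mpoly_vars f \<subseteq> {..<N * N}) \<and>
     (let X = genX N; Y = genY N;
          eqX = (\<lambda>f. mpoly_eval mconst (mat_coords N X) f) ` I \<union> {det X - 1};
          eqY = (\<lambda>f. mpoly_eval mconst (mat_coords N Y) f) ` I \<union> {det Y - 1}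
      in (\<forall>f\<in>I. mpoly_eval id (mat_coords N (1\<^sub>m N)) f = 0) \<and>
         (\<forall>f\<in>I. mpoly_eval mconst (mat_coords N (X * Y)) f \<in> ideal_gen (eqX \<union> eqY)) \<and>
         (\<forall>f\<in>I. mpoly_eval mconst (mat_coords N (adj_mat X)) f \<in> ideal_gen eqX))"

text \<open>A[[t]] inside A((t)); likewise A^u[[t^{1/n}]] inside A^u((t^{1/n})) (variable s = t^{1/n}).\<close>
definition fls_integral_part :: "'b::zero fls set" where
  "fls_integral_part = {x. \<forall>k<0. fls_nth x k = 0}"

text \<open>A[lambda,lambda^{-1}][[t]] inside A((lambda))((t)).\<close>
definition laurent_poly_power_series :: "'a::zero fls fls set" where
  "laurent_poly_power_series =
     {y. (\<forall>k<0. fls_nth y k = 0) \<and> (\<forall>k. finite {i. fls_nth (fls_nth y k) i \<noteq> 0})}"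

text \<open>(1 + u s^m)^k in A[u][[s]] for k an integer (for k < 0 via the geometric series).\<close>
definition sigma_w :: "nat \<Rightarrow> int \<Rightarrow> 'a::comm_ring_1 poly fps" where
  "sigma_w m k =
     (if k \<ge> 0 then (1 + fps_const [:0, 1:] * fps_X ^ m) ^ nat k
      else Abs_fps (\<lambda>j. if m dvd j then (- [:0, 1:]) ^ (j div m) else 0) ^ nat (- k))"

text \<open>sigma_r : A((t)) -> A^u((t^{1/n})), the continuous A-algebra map t |-> t(1 + u t^r),
  r = m/n in lowest terms; with s = t^{1/n}: t |-> s^n (1 + u s^m).\<close>
definition sigma_r :: "rat \<Rightarrow> 'a::comm_ring_1 fls \<Rightarrow> 'a poly fls" where
  "sigma_r r x = (case quotient_of r of (m, n) \<Rightarrow>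
     Abs_fls (\<lambda>e. \<Sum>k\<in>{fls_subdegree x .. e div n}.
        [:fls_nth x k:] * fps_nth (sigma_w (nat m) k) (nat (e - n * k))))"

text \<open>t |-> lambda t : A((t)) -> A[lambda,lambda^{-1}]((t)) (inside A((lambda))((t))).\<close>
definition lambda_subst :: "'a::comm_ring_1 fls \<Rightarrow> 'a fls fls" where
  "lambda_subst x = Abs_fls (\<lambda>k. fls_shift (- k) (fls_const (fls_nth x k)))"

text \<open>The inclusion A((t)) -> A^u((t^{1/n})), t |-> s^n (n = denominator of r).\<close>
definition incl_r :: "rat \<Rightarrow> 'a::comm_ring_1 fls \<Rightarrow> 'a poly fls" where
  "incl_r r x = (case quotient_of r of (m, n) \<Rightarrow>
     Abs_fls (\<lambda>e. if n dvd e then [:fls_nth x (e div n):] else 0))"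

text \<open>The inclusion A((t)) -> A[lambda,lambda^{-1}]((t)) (coefficientwise).\<close>
definition incl_lambda :: "'a::comm_ring_1 fls \<Rightarrow> 'a fls fls" where
  "incl_lambda x = Abs_fls (\<lambda>k. fls_const (fls_nth x k))"

text \<open>The inverse of g in SL_N is its adjugate.  The infimum is taken in the extended reals
  (the infimum of the empty set being +infinity).\<close>
definition r_index :: "nat \<Rightarrow> 'a::comm_ring_1 mpoly set \<Rightarrow> 'a fls mat \<Rightarrow> ereal" where
  "r_index N I g =
     (if g \<in> group_points N I fls_const fls_integral_part then -1
      else Inf ((\<lambda>r. ereal (real_of_rat r)) `
        {r::rat. 0 < r \<and>
           map_mat (incl_r r) (adj_mat g) * map_mat (sigma_r r) g
             \<in> group_points N I (\<lambda>a. fls_const [:a:]) fls_integral_part}))"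

end

theory Submission
  imports Defs
begin

text \<open>
  Write \<open>h = g\<^sup>-\<^sup>1 g(\<lambda>t)\<close>. The coefficient of \<open>\<lambda>\<^sup>j t\<^sup>k\<close> in the entry \<open>(i0, j0)\<close> of \<open>h\<close>
  is the pairing \<open>T(k - j, j)\<close>, where \<open>T(i, j)\<close> sums over \<open>l\<close> the \<open>t\<^sup>i\<close>-coefficient of
  \<open>(g\<^sup>-\<^sup>1)(i0, l)\<close> times the \<open>t\<^sup>j\<close>-coefficient of \<open>g(l, j0)\<close>. So \<open>h\<close> has entries in
  \<open>A[\<lambda>, \<lambda>\<^sup>-\<^sup>1][[t]]\<close> iff \<open>T(i, j) = 0\<close> whenever \<open>i + j < 0\<close>.

  The same pairings govern \<open>g\<^sup>-\<^sup>1 \<sigma>\<^sub>r(g)\<close>: for \<open>r = m/n\<close> and \<open>s = t\<^sup>1\<^sup>/\<^sup>n\<close> its entries are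
  \<open>\<Sum> T(i, j) s\<^sup>n\<^sup>(\<^sup>i\<^sup>+\<^sup>j\<^sup>) (1 + u s\<^sup>m)\<^sup>j\<close>. If the pairings with \<open>i + j < 0\<close> vanish, these
  are integral for every \<open>r > 0\<close>, whence \<open>r(g) \<le> 0\<close>. Otherwise fix \<open>k0 = i + j < 0\<close> with
  \<open>T(i, j) \<noteq> 0\<close>. The coefficient of \<open>u\<^sup>p\<close> in \<open>s\<close>-degree \<open>n k0 + m p\<close> is the coefficient of
  \<open>(u s\<^sup>m)\<^sup>p\<close> in \<open>\<Sum>\<^sub>j T(k0 - j, j) (1 + u s\<^sup>m)\<^sup>j\<close>; as the powers of \<open>1 + u s\<^sup>m\<close> are
  independent, one of these with \<open>p \<le> P\<close> is nonzero, \<open>P\<close> not depending on \<open>r\<close>. Integrality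
  then forces \<open>r \<ge> -k0 / P\<close>, so \<open>r(g) > 0\<close>.

  Both conditions can be checked entrywise because the two conjugates always lie in \<open>G\<close> over
  the big rings, \<open>G\<close> being a subgroup scheme.
\<close>

section \<open>Evaluation of polynomials and points of \<open>G\<close>\<close>

definition monomial_eval :: "(nat \<Rightarrow> 'b::comm_ring_1) \<Rightarrow> (nat \<Rightarrow>\<^sub>0 nat) \<Rightarrow> 'b" where
  "monomial_eval x m = (\<Prod>i\<in>Poly_Mapping.keys m. x i ^ Poly_Mapping.lookup m i)"

lemma monomial_eval_superset:
  assumes "finite S" "Poly_Mapping.keys m \<subseteq> S"
  shows "monomial_eval x m = (\<Prod>i\<in>S. x i ^ Poly_Mapping.lookup m i)"
  unfolding monomial_eval_def
  by (rule prod.mono_neutral_left[OF assms]) (auto simp: in_keys_iff)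

lemma monomial_eval_add: "monomial_eval x (m1 + m2) = monomial_eval x m1 * monomial_eval x m2"
proof -
  let ?S = "Poly_Mapping.keys m1 \<union> Poly_Mapping.keys m2"
  have "monomial_eval x (m1 + m2) = (\<Prod>i\<in>?S. x i ^ Poly_Mapping.lookup (m1 + m2) i)"
    by (rule monomial_eval_superset) (simp_all add: keys_add)
  also have "\<dots> = (\<Prod>i\<in>?S. x i ^ Poly_Mapping.lookup m1 i) * (\<Prod>i\<in>?S. x i ^ Poly_Mapping.lookup m2 i)"
    by (simp add: lookup_add power_add prod.distrib)
  finally show ?thesis
    by (simp add: monomial_eval_superset[of ?S])
qed

lemma mpoly_eval_0 [simp]: "mpoly_eval phi x 0 = 0"
  by (simp add: mpoly_eval_def)

lemma mpoly_eval_monomial_eval: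
  "mpoly_eval phi x p = (\<Sum>m\<in>Poly_Mapping.keys p. phi (Poly_Mapping.lookup p m) * monomial_eval x m)"
  by (simp add: mpoly_eval_def monomial_eval_def)

lemma poly_mapping_sum_single_lookup:
  "p = (\<Sum>m\<in>Poly_Mapping.keys p. Poly_Mapping.single m (Poly_Mapping.lookup p m))"
  by (rule poly_mapping_eqI) (simp add: lookup_sum lookup_single when_def in_keys_iff)

context
  fixes phi :: "'a::comm_ring_1 \<Rightarrow> 'b::comm_ring_1"
  assumes phi: "comm_ring_hom phi"
begin

interpretation comm_ring_hom phi by (fact phi)

lemma mpoly_eval_superset:
  assumes "finite S" "Poly_Mapping.keys p \<subseteq> S"
  shows "mpoly_eval phi x p = (\<Sum>m\<in>S. phi (Poly_Mapping.lookup p m) * monomial_eval x m)"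
  unfolding mpoly_eval_monomial_eval
  by (rule sum.mono_neutral_left[OF assms]) (auto simp: in_keys_iff)

lemma mpoly_eval_add: "mpoly_eval phi x (p + q) = mpoly_eval phi x p + mpoly_eval phi x q"
  by (simp add: mpoly_eval_superset[of "Poly_Mapping.keys p \<union> Poly_Mapping.keys q"]
      keys_add lookup_add hom_add sum.distrib distrib_right)

lemma mpoly_eval_sum: "mpoly_eval phi x (sum f A) = (\<Sum>a\<in>A. mpoly_eval phi x (f a))"
  by (induction A rule: infinite_finite_induct) (simp_all add: mpoly_eval_add)

lemma mpoly_eval_single: "mpoly_eval phi x (Poly_Mapping.single m c) = phi c * monomial_eval x m"
  by (simp add: mpoly_eval_monomial_eval)

lemma mpoly_eval_mult: "mpoly_eval phi x (p * q) = mpoly_eval phi x p * mpoly_eval phi x q"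
proof -
  let ?P = "Poly_Mapping.keys p" and ?Q = "Poly_Mapping.keys q"
  have "p * q = (\<Sum>a\<in>?P. \<Sum>b\<in>?Q.
      Poly_Mapping.single (a + b) (Poly_Mapping.lookup p a * Poly_Mapping.lookup q b))"
    by (subst poly_mapping_sum_single_lookup[of p], subst poly_mapping_sum_single_lookup[of q])
       (simp add: sum_distrib_left sum_distrib_right mult_single sum.swap[of _ ?Q])
  then have "mpoly_eval phi x (p * q) = (\<Sum>a\<in>?P. \<Sum>b\<in>?Q.
      phi (Poly_Mapping.lookup p a) * monomial_eval x a * (phi (Poly_Mapping.lookup q b) * monomial_eval x b))"
    by (simp add: mpoly_eval_sum mpoly_eval_single monomial_eval_add hom_mult mult_ac)
  also have "\<dots> = mpoly_eval phi x p * mpoly_eval phi x q"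
    by (simp add: mpoly_eval_monomial_eval sum_distrib_left sum_distrib_right sum.swap[of _ ?Q])
  finally show ?thesis .
qed

lemma comm_ring_hom_mpoly_eval: "comm_ring_hom (mpoly_eval phi x)"
proof
  show "mpoly_eval phi x 1 = 1"
    using mpoly_eval_single[of x 0 1] by (simp add: monomial_eval_def)
qed (simp_all add: mpoly_eval_add mpoly_eval_mult)

lemma mpoly_eval_mvar: "mpoly_eval phi x (mvar k) = x k"
  by (simp add: mvar_def mpoly_eval_single monomial_eval_def)

lemma mpoly_eval_mconst: "mpoly_eval phi x (mconst c) = phi c"
  by (simp add: mconst_def mpoly_eval_single monomial_eval_def)

lemma mpoly_eval_mpoly_eval_mconst:
  "mpoly_eval phi y (mpoly_eval mconst x f) = mpoly_eval phi (\<lambda>i. mpoly_eval phi y (x i)) f"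
proof -
  interpret E: comm_ring_hom "mpoly_eval phi y" by (rule comm_ring_hom_mpoly_eval)
  show ?thesis
    unfolding mpoly_eval_def[of mconst] mpoly_eval_def[of phi _ f]
    by (simp only: E.hom_sum E.hom_mult E.hom_prod E.hom_power mpoly_eval_mconst)
qed

end

lemma (in comm_ring_hom) hom_mpoly_eval:
  "hom (mpoly_eval phi x f) = mpoly_eval (hom \<circ> phi) (hom \<circ> x) f"
  unfolding mpoly_eval_def by (simp add: hom_sum hom_mult hom_prod hom_power)

lemma ideal_gen_eval_eq_0:
  assumes "comm_ring_hom ev" "x \<in> ideal_gen B" "\<And>b. b \<in> B \<Longrightarrow> ev b = 0"
  shows "ev x = 0"
proof -
  interpret comm_ring_hom ev by fact
  from assms(2) obtain F c where "finite F" "F \<subseteq> B" "x = (\<Sum>g\<in>F. c g * g)"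
    by (auto simp: ideal_gen_def)
  then show ?thesis
    using assms(3) by (auto simp: hom_sum hom_mult intro!: sum.neutral)
qed

lemma (in comm_ring_hom) hom_adj_mat: "adj_mat (map_mat hom A) = map_mat hom (adj_mat A)"
proof -
  have "mat_delete (map_mat hom A) i j = map_mat hom (mat_delete A i j)" for i j
    by (rule eq_matI) (auto simp: mat_delete_def)
  then show ?thesis
    by (intro eq_matI) (auto simp: adj_mat_def cofactor_def hom_mult hom_power hom_uminus)
qed

lemma index_lt_square: "i < N \<Longrightarrow> j < N \<Longrightarrow> i * N + j < N * (N::nat)"
proof -
  assume "i < N" "j < N"
  then have "i * N + j < (i + 1) * N" by simp
  also have "\<dots> \<le> N * N" using \<open>i < N\<close> by (intro mult_right_mono) auto
  finally show ?thesis .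
qed

lemma mat_coords_map_mat:
  assumes "psi 0 = 0" "M \<in> carrier_mat N N"
  shows "mat_coords N (map_mat psi M) = psi \<circ> mat_coords N M"
proof
  fix k
  show "mat_coords N (map_mat psi M) k = (psi \<circ> mat_coords N M) k"
  proof (cases "k < N * N")
    case True
    then have "0 < N" by (cases N) auto
    with True have "k div N < N" "k mod N < N"
      by (simp_all add: less_mult_imp_div_less)
    then show ?thesis using True assms by (auto simp: mat_coords_def)
  qed (auto simp: mat_coords_def assms)
qed

lemma group_points_map_mat:
  assumes "comm_ring_hom psi" "M \<in> group_points N I phi UNIV" "\<And>a. phi' a = psi (phi a)"
  shows "map_mat psi M \<in> group_points N I phi' UNIV"
proof -
  interpret comm_ring_hom psi by fact
  have "phi' = psi \<circ> phi" using assms(3) by auto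
  with assms(2) show ?thesis
    by (auto simp: group_points_def hom_mpoly_eval[symmetric] mat_coords_map_mat hom_det[symmetric])
qed

lemma group_points_subring:
  "M \<in> group_points N I phi S \<longleftrightarrow> M \<in> group_points N I phi UNIV \<and> (\<forall>i<N. \<forall>j<N. M $$ (i, j) \<in> S)"
  by (auto simp: group_points_def)

abbreviation defining_equations :: "nat \<Rightarrow> 'a::comm_ring_1 mpoly set \<Rightarrow> 'a mpoly mat \<Rightarrow> 'a mpoly set" where
  "defining_equations N I X \<equiv> (\<lambda>f. mpoly_eval mconst (mat_coords N X) f) ` I \<union> {det X - 1}"

lemma eval_defining_equations:
  assumes phi: "comm_ring_hom phi" and M: "M \<in> group_points N I phi UNIV"
    and X: "X \<in> carrier_mat N N" and XM: "map_mat (mpoly_eval phi y) X = M"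
    and b: "b \<in> defining_equations N I X"
  shows "mpoly_eval phi y b = 0"
proof -
  interpret E: comm_ring_hom "mpoly_eval phi y" by (rule comm_ring_hom_mpoly_eval[OF phi])
  have coords: "(\<lambda>k. mpoly_eval phi y (mat_coords N X k)) = mat_coords N M"
    using mat_coords_map_mat[of "mpoly_eval phi y" X N] X XM by (auto simp: comp_def)
  from b show ?thesis
  proof
    assume "b \<in> (\<lambda>f. mpoly_eval mconst (mat_coords N X) f) ` I"
    then obtain f where "f \<in> I" "b = mpoly_eval mconst (mat_coords N X) f" by blast
    then show ?thesis
      using M by (simp add: mpoly_eval_mpoly_eval_mconst[OF phi] coords group_points_def)
  next
    assume "b \<in> {det X - 1}"
    then show ?thesis
      using M E.hom_det[of X] by (simp add: XM E.hom_minus group_points_def)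
  qed
qed

lemma eval_genX:
  assumes "comm_ring_hom phi" "\<And>k. k < N * N \<Longrightarrow> y k = mat_coords N M k" "M \<in> carrier_mat N N"
  shows "map_mat (mpoly_eval phi y) (genX N) = M"
  using assms by (intro eq_matI) (auto simp: genX_def mpoly_eval_mvar index_lt_square mat_coords_def)

lemma eval_genY:
  assumes "comm_ring_hom phi" "\<And>k. k < N * N \<Longrightarrow> y (N * N + k) = mat_coords N M k"
    "M \<in> carrier_mat N N"
  shows "map_mat (mpoly_eval phi y) (genY N) = M"
  using assms by (intro eq_matI)
    (auto simp: genY_def mpoly_eval_mvar index_lt_square mat_coords_def add.assoc)

lemma closed_subgroup_scheme_SL_mult:
  "closed_subgroup_scheme_SL N I \<Longrightarrow> f \<in> I \<Longrightarrow> mpoly_eval mconst (mat_coords N (genX N * genY N)) f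
     \<in> ideal_gen (defining_equations N I (genX N) \<union> defining_equations N I (genY N))"
  by (simp add: closed_subgroup_scheme_SL_def Let_def)

lemma closed_subgroup_scheme_SL_adj_mat:
  "closed_subgroup_scheme_SL N I \<Longrightarrow> f \<in> I \<Longrightarrow>
     mpoly_eval mconst (mat_coords N (adj_mat (genX N))) f \<in> ideal_gen (defining_equations N I (genX N))"
  by (simp add: closed_subgroup_scheme_SL_def Let_def)

lemma group_points_mult:
  assumes G: "closed_subgroup_scheme_SL N I" and phi: "comm_ring_hom phi"
    and M: "M \<in> group_points N I phi UNIV" and M': "M' \<in> group_points N I phi UNIV"
  shows "M * M' \<in> group_points N I phi UNIV"
proof -
  let ?X = "genX N" and ?Y = "genY N"
  define y where "y k = (if k < N * N then mat_coords N M k else mat_coords N M' (k - N * N))" for k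
  interpret E: comm_ring_hom "mpoly_eval phi y" by (rule comm_ring_hom_mpoly_eval[OF phi])
  have Mc: "M \<in> carrier_mat N N" and M'c: "M' \<in> carrier_mat N N"
    using M M' by (auto simp: group_points_def)
  have X: "?X \<in> carrier_mat N N" and Y: "?Y \<in> carrier_mat N N"
    by (simp_all add: genX_def genY_def)
  have eX: "map_mat (mpoly_eval phi y) ?X = M" by (rule eval_genX[OF phi _ Mc]) (simp add: y_def)
  have eY: "map_mat (mpoly_eval phi y) ?Y = M'" by (rule eval_genY[OF phi _ M'c]) (simp add: y_def)
  have eXY: "map_mat (mpoly_eval phi y) (?X * ?Y) = M * M'"
    using E.mat_hom_mult[OF X Y] eX eY by simp
  have "mpoly_eval phi (mat_coords N (M * M')) f = 0" if "f \<in> I" for f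
  proof -
    have "mpoly_eval phi y (mpoly_eval mconst (mat_coords N (?X * ?Y)) f) = 0"
      using eval_defining_equations[OF phi M X eX] eval_defining_equations[OF phi M' Y eY]
      by (intro ideal_gen_eval_eq_0[OF E.comm_ring_hom_axioms closed_subgroup_scheme_SL_mult[OF G that]])
         blast
    then show ?thesis
      using mat_coords_map_mat[of "mpoly_eval phi y" "?X * ?Y" N]
      by (simp add: mpoly_eval_mpoly_eval_mconst[OF phi] mult_carrier_mat[OF X Y] eXY comp_def)
  qed
  moreover have "det (M * M') = 1"
    using M M' by (simp add: det_mult[OF Mc M'c] group_points_def)
  ultimately show ?thesis
    using Mc M'c by (auto simp: group_points_def)
qed

lemma group_points_adj_mat:
  assumes G: "closed_subgroup_scheme_SL N I" and phi: "comm_ring_hom phi"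
    and M: "M \<in> group_points N I phi UNIV"
  shows "adj_mat M \<in> group_points N I phi UNIV"
proof -
  let ?X = "genX N" and ?y = "mat_coords N M"
  interpret E: comm_ring_hom "mpoly_eval phi ?y" by (rule comm_ring_hom_mpoly_eval[OF phi])
  have Mc: "M \<in> carrier_mat N N" and detM: "det M = 1" using M by (auto simp: group_points_def)
  have X: "?X \<in> carrier_mat N N" by (simp add: genX_def)
  have eX: "map_mat (mpoly_eval phi ?y) ?X = M" by (rule eval_genX[OF phi _ Mc]) simp
  have adjM: "adj_mat M \<in> carrier_mat N N" using adj_mat[OF Mc] by simp
  have eadjX: "map_mat (mpoly_eval phi ?y) (adj_mat ?X) = adj_mat M"
    using E.hom_adj_mat[of ?X] eX by simp
  have "mpoly_eval phi (mat_coords N (adj_mat M)) f = 0" if "f \<in> I" for f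
  proof -
    have "mpoly_eval phi ?y (mpoly_eval mconst (mat_coords N (adj_mat ?X)) f) = 0"
      using eval_defining_equations[OF phi M X eX]
      by (intro ideal_gen_eval_eq_0[OF E.comm_ring_hom_axioms closed_subgroup_scheme_SL_adj_mat[OF G that]])
    then show ?thesis
      using mat_coords_map_mat[of "mpoly_eval phi ?y" "adj_mat ?X" N]
      by (simp add: mpoly_eval_mpoly_eval_mconst[OF phi] adj_mat(1)[OF X] eadjX comp_def)
  qed
  moreover have "det (adj_mat M) = 1"
    using det_mult[OF Mc adjM] adj_mat(2)[OF Mc] detM by simp
  ultimately show ?thesis
    using adjM by (auto simp: group_points_def)
qed

section \<open>Substitutions into Laurent series\<close>

lemma sum_int_interval_support:
  fixes f :: "int \<Rightarrow> 'b::comm_monoid_add"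
  assumes "\<And>k. f k \<noteq> 0 \<Longrightarrow> a \<le> k \<and> k \<le> b" "L \<le> a" "b \<le> U" "L' \<le> a" "b \<le> U'"
  shows "sum f {L..U} = sum f {L'..U'}"
proof -
  have z: "\<And>k. k \<notin> {a..b} \<Longrightarrow> f k = 0" using assms(1) by (meson atLeastAtMost_iff)
  have "sum f {L..U} = sum f {a..b}"
    by (rule sum.mono_neutral_right) (use assms(2-5) z in auto)
  also have "\<dots> = sum f {L'..U'}"
    by (rule sum.mono_neutral_left) (use assms(2-5) z in auto)
  finally show ?thesis .
qed

lemma sum_int_interval_shift:
  fixes f :: "int \<Rightarrow> 'b::comm_monoid_add"
  shows "sum f {L..U} = (\<Sum>k\<in>{L + c..U + c}. f (k - c))"
  by (rule sum.reindex_bij_witness[of _ "\<lambda>k. k - c" "\<lambda>k. k + c"]) auto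

lemma int_le_div_iff_mult_le: "0 < (n::int) \<Longrightarrow> k \<le> e div n \<longleftrightarrow> n * k \<le> e"
proof
  assume "0 < n" "k \<le> e div n"
  then have "n * k \<le> n * (e div n)" by simp
  also have "\<dots> \<le> e" using \<open>0 < n\<close> by (smt (verit) minus_mod_eq_mult_div pos_mod_sign)
  finally show "n * k \<le> e" .
next
  assume "0 < n" "n * k \<le> e"
  then show "k \<le> e div n" using zdiv_mono1 by fastforce
qed

definition fps_nth_int :: "'b::zero fps \<Rightarrow> int \<Rightarrow> 'b" where
  "fps_nth_int A d = (if 0 \<le> d then fps_nth A (nat d) else 0)"

lemma fps_nth_int_neg [simp]: "d < 0 \<Longrightarrow> fps_nth_int A d = 0"
  by (simp add: fps_nth_int_def)

lemma fps_nth_int_mult: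
  fixes A B :: "'b::comm_ring_1 fps"
  assumes "L \<le> 0" "D \<le> U"
  shows "fps_nth_int (A * B) D = (\<Sum>d\<in>{L..U}. fps_nth_int A d * fps_nth_int B (D - d))"
proof (cases "D < 0")
  case False
  have "(\<Sum>d\<in>{L..U}. fps_nth_int A d * fps_nth_int B (D - d))
      = (\<Sum>d\<in>{0..D}. fps_nth_int A d * fps_nth_int B (D - d))"
    by (rule sum_int_interval_support[where a=0 and b=D])
       (use assms False in \<open>auto simp: fps_nth_int_def split: if_splits\<close>)
  also have "\<dots> = (\<Sum>i\<in>{0..nat D}. fps_nth_int A (int i) * fps_nth_int B (D - int i))"
    by (rule sum.reindex_bij_witness[of _ int nat]) (use False in auto)
  also have "\<dots> = (\<Sum>i\<in>{0..nat D}. fps_nth A i * fps_nth B (nat D - i))"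
    by (rule sum.cong) (use False in \<open>auto simp: fps_nth_int_def nat_diff_distrib\<close>)
  also have "\<dots> = fps_nth_int (A * B) D"
    using False by (simp add: fps_nth_int_def fps_mult_nth)
  finally show ?thesis by simp
qed (auto simp: fps_nth_int_def intro!: sum.neutral)

lemma sum_fps_nth_int_convolution:
  fixes A B :: "'b::comm_ring_1 fps"
  assumes n: "0 < (n::int)" and "Lx \<le> i" "Ly \<le> j"
  shows "(\<Sum>e1\<in>{n * Lx..e - n * Ly}. fps_nth_int A (e1 - n * i) * fps_nth_int B (e - e1 - n * j))
       = fps_nth_int (A * B) (e - n * (i + j))"
proof -
  have "n * Lx \<le> n * i" "n * Ly \<le> n * j" using assms by simp_all
  have "(\<Sum>e1\<in>{n * Lx..e - n * Ly}. fps_nth_int A (e1 - n * i) * fps_nth_int B (e - e1 - n * j))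
      = (\<Sum>d\<in>{n * Lx - n * i..e - n * Ly - n * i}. fps_nth_int A d * fps_nth_int B (e - n * (i + j) - d))"
    by (subst sum_int_interval_shift[where c="- n * i"]) (simp add: algebra_simps)
  also have "\<dots> = fps_nth_int (A * B) (e - n * (i + j))"
    by (rule fps_nth_int_mult[symmetric]) (use \<open>n * Lx \<le> n * i\<close> \<open>n * Ly \<le> n * j\<close> in \<open>auto simp: algebra_simps\<close>)
  finally show ?thesis .
qed

text \<open>The substitution \<open>t \<mapsto> s\<^sup>n w\<close> for a unit \<open>w\<close> of \<open>B[[s]]\<close>, applied after mapping coefficients
  along \<open>phi\<close>: \<open>\<Sum>\<^sub>k x\<^sub>k t\<^sup>k \<mapsto> \<Sum>\<^sub>k phi(x\<^sub>k) s\<^sup>n\<^sup>k w\<^sup>k\<close>, where \<open>W k\<close> stands for \<open>w\<^sup>k\<close>.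
  The maps \<open>incl_lambda\<close>, \<open>lambda_subst\<close>, \<open>incl_r r\<close> and \<open>sigma_r r\<close> are all of this form.\<close>
definition fls_subst :: "('a::zero \<Rightarrow> 'b::comm_ring_1) \<Rightarrow> int \<Rightarrow> (int \<Rightarrow> 'b fps) \<Rightarrow> 'a fls \<Rightarrow> 'b fls" where
  "fls_subst phi n W x = Abs_fls (\<lambda>e. \<Sum>k\<in>{fls_subdegree x..e div n}.
     phi (fls_nth x k) * fps_nth_int (W k) (e - n * k))"

lemma fls_nth_fls_subst:
  assumes n: "0 < n" and phi0: "phi 0 = 0"
    and L: "\<And>k. k < L \<Longrightarrow> fls_nth x k = 0" and U: "e div n \<le> U"
  shows "fls_nth (fls_subst phi n W x) e = (\<Sum>k\<in>{L..U}. phi (fls_nth x k) * fps_nth_int (W k) (e - n * k))"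
proof -
  have "fls_nth (fls_subst phi n W x) e
      = (\<Sum>k\<in>{fls_subdegree x..e div n}. phi (fls_nth x k) * fps_nth_int (W k) (e - n * k))"
    unfolding fls_subst_def
    by (rule nth_Abs_fls_lower_bound[where N="n * fls_subdegree x"])
       (use n in \<open>auto simp: int_le_div_iff_mult_le\<close>)
  also have "\<dots> = (\<Sum>k\<in>{L..U}. phi (fls_nth x k) * fps_nth_int (W k) (e - n * k))"
  proof (rule sum_int_interval_support[where a="max L (fls_subdegree x)" and b="e div n"])
    fix k assume nz: "phi (fls_nth x k) * fps_nth_int (W k) (e - n * k) \<noteq> 0"
    then have xk: "fls_nth x k \<noteq> 0" using phi0 by auto
    from nz have "n * k \<le> e" by (cases "e - n * k < 0") auto
    then have "k \<le> e div n" using n by (simp add: int_le_div_iff_mult_le)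
    moreover have "L \<le> k" using xk L by (meson not_less)
    moreover have "fls_subdegree x \<le> k" using xk by (rule fls_subdegree_leI)
    ultimately show "max L (fls_subdegree x) \<le> k \<and> k \<le> e div n" by simp
  qed (use U in auto)
  finally show ?thesis .
qed

lemma fls_nth_fls_subst_below:
  assumes "0 < n" "phi 0 = 0" "\<And>k. k < L \<Longrightarrow> fls_nth x k = 0" "e < n * L"
  shows "fls_nth (fls_subst phi n W x) e = 0"
proof -
  have "\<not> L \<le> e div n" using assms(1,4) by (simp add: int_le_div_iff_mult_le)
  then have "e div n < L" by simp
  then show ?thesis
    using fls_nth_fls_subst[where phi=phi and L=L and x=x and U="e div n", OF assms(1-3) order.refl] by simp
qed

lemma fls_times_nth_bounds:
  fixes f g :: "'b::comm_ring_1 fls"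
  assumes Lf: "\<And>i. i < Lf \<Longrightarrow> fls_nth f i = 0" and Lg: "\<And>i. i < Lg \<Longrightarrow> fls_nth g i = 0"
  shows "fls_nth (f * g) e = (\<Sum>i\<in>{Lf..e - Lg}. fls_nth f i * fls_nth g (e - i))"
  unfolding fls_times_nth(2)
proof (rule sum_int_interval_support[where a="max Lf (fls_subdegree f)"
      and b="min (e - Lg) (e - fls_subdegree g)"])
  fix k assume "fls_nth f k * fls_nth g (e - k) \<noteq> 0"
  then have "fls_nth f k \<noteq> 0" "fls_nth g (e - k) \<noteq> 0" by auto
  then show "max Lf (fls_subdegree f) \<le> k \<and> k \<le> min (e - Lg) (e - fls_subdegree g)"
    using Lf Lg fls_subdegree_leI[of f k] fls_subdegree_leI[of g "e - k"] by (auto simp: not_less[symmetric])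
qed auto

lemma fls_nth_fls_subst_times:
  assumes n: "0 < n" and phi: "comm_ring_hom phi"
    and La: "\<And>k. k < La \<Longrightarrow> fls_nth x k = 0" and Lb: "\<And>k. k < Lb \<Longrightarrow> fls_nth y k = 0"
    and U1: "(e - n * Lb) div n \<le> U" and U2: "(e - n * La) div n \<le> U"
  shows "fls_nth (fls_subst phi n W1 x * fls_subst phi n W2 y) e
     = (\<Sum>i\<in>{La..U}. \<Sum>j\<in>{Lb..U}. phi (fls_nth x i) * phi (fls_nth y j)
          * fps_nth_int (W1 i * W2 j) (e - n * (i + j)))"
proof -
  interpret comm_ring_hom phi by fact
  define a where "a i = phi (fls_nth x i)" for i
  define b where "b j = phi (fls_nth y j)" for j
  let ?E = "{n * La..e - n * Lb}"
  have "fls_nth (fls_subst phi n W1 x * fls_subst phi n W2 y) e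
     = (\<Sum>e1\<in>?E. fls_nth (fls_subst phi n W1 x) e1 * fls_nth (fls_subst phi n W2 y) (e - e1))"
    by (intro fls_times_nth_bounds fls_nth_fls_subst_below[where phi=phi and L=La and x=x, OF n hom_zero La]
        fls_nth_fls_subst_below[where phi=phi and L=Lb and x=y, OF n hom_zero Lb])
  also have "\<dots> = (\<Sum>e1\<in>?E. (\<Sum>i\<in>{La..U}. a i * fps_nth_int (W1 i) (e1 - n * i))
                           * (\<Sum>j\<in>{Lb..U}. b j * fps_nth_int (W2 j) (e - e1 - n * j)))"
  proof (rule sum.cong[OF refl])
    fix e1 assume "e1 \<in> ?E"
    then have "e1 div n \<le> U" "(e - e1) div n \<le> U"
      using U1 U2 n zdiv_mono1[of e1 "e - n * Lb" n] zdiv_mono1[of "e - e1" "e - n * La" n] by auto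
    then show "fls_nth (fls_subst phi n W1 x) e1 * fls_nth (fls_subst phi n W2 y) (e - e1) =
      (\<Sum>i\<in>{La..U}. a i * fps_nth_int (W1 i) (e1 - n * i))
      * (\<Sum>j\<in>{Lb..U}. b j * fps_nth_int (W2 j) (e - e1 - n * j))"
      by (simp add: fls_nth_fls_subst[where phi=phi and L=La and x=x, OF n _ La] fls_nth_fls_subst[where phi=phi and L=Lb and x=y, OF n _ Lb]
          a_def b_def)
  qed
  also have "\<dots> = (\<Sum>e1\<in>?E. \<Sum>i\<in>{La..U}. \<Sum>j\<in>{Lb..U}.
      a i * b j * (fps_nth_int (W1 i) (e1 - n * i) * fps_nth_int (W2 j) (e - e1 - n * j)))"
    by (simp add: sum_product mult_ac)
  also have "\<dots> = (\<Sum>i\<in>{La..U}. \<Sum>j\<in>{Lb..U}. \<Sum>e1\<in>?E.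
      a i * b j * (fps_nth_int (W1 i) (e1 - n * i) * fps_nth_int (W2 j) (e - e1 - n * j)))"
    by (subst sum.swap) (rule sum.cong[OF refl], rule sum.swap)
  also have "\<dots> = (\<Sum>i\<in>{La..U}. \<Sum>j\<in>{Lb..U}. a i * b j * fps_nth_int (W1 i * W2 j) (e - n * (i + j)))"
    by (intro sum.cong refl) (simp add: sum_distrib_left[symmetric] sum_fps_nth_int_convolution[OF n])
  finally show ?thesis by (simp add: a_def b_def)
qed

lemma sum_Cauchy_product_int:
  fixes a b c :: "int \<Rightarrow> 'b::comm_semiring_0"
  assumes a: "\<And>i. i < Lx \<Longrightarrow> a i = 0" and b: "\<And>j. j < Ly \<Longrightarrow> b j = 0" and c: "\<And>k. V < k \<Longrightarrow> c k = 0"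
    and U: "V - Ly \<le> U" "V - Lx \<le> U"
  shows "(\<Sum>k\<in>{Lx + Ly..V}. (\<Sum>i\<in>{Lx..k - Ly}. a i * b (k - i)) * c k)
       = (\<Sum>i\<in>{Lx..U}. \<Sum>j\<in>{Ly..U}. a i * b j * c (i + j))"
proof -
  have "(\<Sum>k\<in>{Lx + Ly..V}. (\<Sum>i\<in>{Lx..k - Ly}. a i * b (k - i)) * c k)
      = (\<Sum>k\<in>{Lx + Ly..V}. \<Sum>i\<in>{Lx..U}. a i * b (k - i) * c k)"
    unfolding sum_distrib_right
  proof (rule sum.cong[OF refl])
    fix k assume "k \<in> {Lx + Ly..V}"
    then show "(\<Sum>i\<in>{Lx..k - Ly}. a i * b (k - i) * c k) = (\<Sum>i\<in>{Lx..U}. a i * b (k - i) * c k)"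
    proof (intro sum_int_interval_support[where a=Lx and b="k - Ly"])
      fix i assume "a i * b (k - i) * c k \<noteq> 0"
      then have "\<not> i < Lx" "\<not> k - i < Ly" using a b by auto
      then show "Lx \<le> i \<and> i \<le> k - Ly" by linarith
    qed (use U in auto)
  qed
  also have "\<dots> = (\<Sum>i\<in>{Lx..U}. \<Sum>k\<in>{Lx + Ly..V}. a i * b (k - i) * c k)"
    by (rule sum.swap)
  also have "\<dots> = (\<Sum>i\<in>{Lx..U}. \<Sum>j\<in>{Lx + Ly - i..V - i}. a i * b j * c (i + j))"
  proof (rule sum.cong[OF refl])
    fix i
    show "(\<Sum>k\<in>{Lx + Ly..V}. a i * b (k - i) * c k) = (\<Sum>j\<in>{Lx + Ly - i..V - i}. a i * b j * c (i + j))"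
      by (subst sum_int_interval_shift[where c="- i"]) (simp add: add.commute)
  qed
  also have "\<dots> = (\<Sum>i\<in>{Lx..U}. \<Sum>j\<in>{Ly..U}. a i * b j * c (i + j))"
  proof (rule sum.cong[OF refl])
    fix i assume "i \<in> {Lx..U}"
    then show "(\<Sum>j\<in>{Lx + Ly - i..V - i}. a i * b j * c (i + j)) = (\<Sum>j\<in>{Ly..U}. a i * b j * c (i + j))"
    proof (intro sum_int_interval_support[where a=Ly and b="V - i"])
      fix j assume "a i * b j * c (i + j) \<noteq> 0"
      then have "\<not> j < Ly" "\<not> V < i + j" using b c by auto
      then show "Ly \<le> j \<and> j \<le> V - i" by linarith
    qed (use U in auto)
  qed
  finally show ?thesis .
qed

lemma fls_nth_fls_subst_of_times:
  assumes n: "0 < n" and phi: "comm_ring_hom phi"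
    and Lx: "\<And>k. k < Lx \<Longrightarrow> fls_nth x k = 0" and Ly: "\<And>k. k < Ly \<Longrightarrow> fls_nth y k = 0"
    and U1: "(e - n * Ly) div n \<le> U" and U2: "(e - n * Lx) div n \<le> U"
  shows "fls_nth (fls_subst phi n W (x * y)) e
     = (\<Sum>i\<in>{Lx..U}. \<Sum>j\<in>{Ly..U}. phi (fls_nth x i) * phi (fls_nth y j)
          * fps_nth_int (W (i + j)) (e - n * (i + j)))"
proof -
  interpret comm_ring_hom phi by fact
  have div_shift: "(e - n * c) div n = e div n - c" for c
    using div_mult_self1[of n e "- c"] n by (simp add: algebra_simps)
  have Lxy: "fls_nth (x * y) k = 0" if "k < Lx + Ly" for k
    using that Lx Ly by (subst fls_times_nth_bounds[OF Lx Ly]) (auto intro!: sum.neutral)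
  have "fls_nth (fls_subst phi n W (x * y)) e
      = (\<Sum>k\<in>{Lx + Ly..e div n}. phi (fls_nth (x * y) k) * fps_nth_int (W k) (e - n * k))"
    by (rule fls_nth_fls_subst[where phi=phi, OF n hom_zero Lxy order.refl])
  also have "\<dots> = (\<Sum>k\<in>{Lx + Ly..e div n}.
      (\<Sum>i\<in>{Lx..k - Ly}. phi (fls_nth x i) * phi (fls_nth y (k - i))) * fps_nth_int (W k) (e - n * k))"
    by (simp add: fls_times_nth_bounds[OF Lx Ly] hom_sum hom_mult)
  also have "\<dots> = (\<Sum>i\<in>{Lx..U}. \<Sum>j\<in>{Ly..U}. phi (fls_nth x i) * phi (fls_nth y j)
      * fps_nth_int (W (i + j)) (e - n * (i + j)))"
  proof (rule sum_Cauchy_product_int)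
    fix k assume "e div n < k"
    then have "e - n * k < 0" using n by (simp add: int_le_div_iff_mult_le flip: not_le)
    then show "fps_nth_int (W k) (e - n * k) = 0" by simp
  qed (use Lx Ly U1 U2 in \<open>simp_all add: div_shift\<close>)
  finally show ?thesis .
qed

locale fls_subst_hom =
  fixes phi :: "'a::comm_ring_1 \<Rightarrow> 'b::comm_ring_1" and n :: int and W :: "int \<Rightarrow> 'b fps"
  assumes phi: "comm_ring_hom phi" and n: "0 < n"
    and W_add: "\<And>a b. W (a + b) = W a * W b" and W_0: "W 0 = 1"
begin

interpretation comm_ring_hom phi by (fact phi)

lemma fls_subst_const: "fls_subst phi n W (fls_const a) = fls_const (phi a)"
proof (rule fls_eqI)
  fix e
  have "fls_nth (fls_subst phi n W (fls_const a)) e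
      = (\<Sum>k\<in>{0..max 0 (e div n)}. phi (fls_nth (fls_const a) k) * fps_nth_int (W k) (e - n * k))"
    by (rule fls_nth_fls_subst[OF n]) auto
  also have "\<dots> = (\<Sum>k\<in>{0..max 0 (e div n)}. if k = 0 then phi a * fps_nth_int 1 e else 0)"
    by (rule sum.cong) (auto simp: W_0)
  also have "\<dots> = fls_nth (fls_const (phi a)) e" by (simp add: fps_nth_int_def)
  finally show "fls_nth (fls_subst phi n W (fls_const a)) e = fls_nth (fls_const (phi a)) e" .
qed

lemma fls_subst_add: "fls_subst phi n W (x + y) = fls_subst phi n W x + fls_subst phi n W y"
proof (rule fls_eqI)
  fix e
  define L where "L = min (fls_subdegree x) (fls_subdegree y)"
  have Lx: "\<And>k. k < L \<Longrightarrow> fls_nth x k = 0" and Ly: "\<And>k. k < L \<Longrightarrow> fls_nth y k = 0"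
    by (auto simp: L_def)
  then have Lxy: "\<And>k. k < L \<Longrightarrow> fls_nth (x + y) k = 0" by simp
  show "fls_nth (fls_subst phi n W (x + y)) e = fls_nth (fls_subst phi n W x + fls_subst phi n W y) e"
    by (simp add: fls_nth_fls_subst[where phi=phi and x=x, OF n hom_zero Lx order.refl]
        fls_nth_fls_subst[where phi=phi and x=y, OF n hom_zero Ly order.refl]
        fls_nth_fls_subst[where phi=phi and x="x + y", OF n hom_zero Lxy order.refl]
        hom_add distrib_right sum.distrib)
qed

lemma fls_subst_mult: "fls_subst phi n W (x * y) = fls_subst phi n W x * fls_subst phi n W y"
proof (rule fls_eqI)
  fix e
  let ?Lx = "fls_subdegree x" and ?Ly = "fls_subdegree y"
  let ?U = "max ((e - n * ?Ly) div n) ((e - n * ?Lx) div n)"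
  show "fls_nth (fls_subst phi n W (x * y)) e = fls_nth (fls_subst phi n W x * fls_subst phi n W y) e"
    by (simp add: fls_nth_fls_subst_of_times[OF n phi, of ?Lx x ?Ly y e ?U]
        fls_nth_fls_subst_times[OF n phi, of ?Lx x ?Ly y e ?U] W_add)
qed

lemma comm_ring_hom_fls_subst: "comm_ring_hom (fls_subst phi n W)"
  by unfold_locales
    (simp_all add: fls_subst_add fls_subst_mult fls_subst_const[of 0, simplified] fls_subst_const[of 1, simplified])

end

lemma comm_ring_hom_fls_const: "comm_ring_hom (fls_const :: 'a::comm_ring_1 \<Rightarrow> 'a fls)"
  by unfold_locales (simp_all add: fls_plus_const)

lemma comm_ring_hom_const_poly: "comm_ring_hom (\<lambda>a::'a::comm_ring_1. [:a:])"
  by unfold_locales (simp_all add: one_pCons)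

lemma comm_ring_hom_comp:
  assumes "comm_ring_hom f" "comm_ring_hom g"
  shows "comm_ring_hom (\<lambda>x. f (g x))"
proof -
  interpret f: comm_ring_hom f by fact
  interpret g: comm_ring_hom g by fact
  show ?thesis
    by unfold_locales (simp_all add: f.hom_add g.hom_add f.hom_mult g.hom_mult)
qed

lemma fls_nth_fls_subst_trivial:
  assumes n: "0 < n" and phi: "comm_ring_hom phi"
  shows "fls_nth (fls_subst phi n (\<lambda>_. 1) x) e = (if n dvd e then phi (fls_nth x (e div n)) else 0)"
proof -
  interpret comm_ring_hom phi by fact
  have "fls_nth (fls_subst phi n (\<lambda>_. 1) x) e
      = (\<Sum>k\<in>{fls_subdegree x..e div n}. phi (fls_nth x k) * fps_nth_int 1 (e - n * k))"
    by (rule fls_nth_fls_subst[OF n]) auto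
  also have "\<dots> = (\<Sum>k\<in>{fls_subdegree x..e div n}.
      if k = e div n then (if n dvd e then phi (fls_nth x k) else 0) else 0)"
  proof (rule sum.cong[OF refl])
    fix k
    have "e - n * k = 0 \<longleftrightarrow> n dvd e \<and> k = e div n" using n by auto
    then show "phi (fls_nth x k) * fps_nth_int 1 (e - n * k)
             = (if k = e div n then (if n dvd e then phi (fls_nth x k) else 0) else 0)"
      by (auto simp: fps_nth_int_def)
  qed
  also have "\<dots> = (if n dvd e then phi (fls_nth x (e div n)) else 0)"
    by (auto simp: not_le)
  finally show ?thesis .
qed

lemma incl_lambda_eq_fls_subst: "incl_lambda = fls_subst fls_const 1 (\<lambda>_. 1)"
proof (rule ext, rule fls_eqI)
  fix x :: "'a::comm_ring_1 fls" and e
  have "fls_nth (incl_lambda x) e = fls_const (fls_nth x e)"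
    unfolding incl_lambda_def by (rule nth_Abs_fls_lower_bound[where N="fls_subdegree x"]) auto
  then show "fls_nth (incl_lambda x) e = fls_nth (fls_subst fls_const 1 (\<lambda>_. 1) x) e"
    by (simp add: fls_nth_fls_subst_trivial[OF _ comm_ring_hom_fls_const])
qed

lemma lambda_subst_eq_fls_subst: "lambda_subst = fls_subst fls_const 1 (\<lambda>k. fps_const (fls_X_intpow k))"
proof (rule ext, rule fls_eqI)
  fix x :: "'a::comm_ring_1 fls" and e
  have "fls_nth (lambda_subst x) e = fls_shift (- e) (fls_const (fls_nth x e))"
    unfolding lambda_subst_def by (rule nth_Abs_fls_lower_bound[where N="fls_subdegree x"]) auto
  moreover have "fls_nth (fls_subst fls_const 1 (\<lambda>k. fps_const (fls_X_intpow k)) x) e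
      = (\<Sum>k\<in>{min (fls_subdegree x) e..e}.
           fls_const (fls_nth x k) * fps_nth_int (fps_const (fls_X_intpow k)) (e - k))"
    by (subst fls_nth_fls_subst[where L="min (fls_subdegree x) e" and U=e]) auto
  moreover have "\<dots> = fls_const (fls_nth x e) * fls_X_intpow e"
    by (subst sum.remove[of _ e]) (auto simp: fps_nth_int_def intro!: sum.neutral)
  ultimately show "fls_nth (lambda_subst x) e = fls_nth (fls_subst fls_const 1 (\<lambda>k. fps_const (fls_X_intpow k)) x) e"
    by (simp add: fls_X_intpow_times_conv_shift)
qed

lemma incl_r_eq_fls_subst:
  assumes q: "quotient_of r = (m, n)"
  shows "incl_r r = fls_subst (\<lambda>a. [:a:]) n (\<lambda>_. 1)"
proof (rule ext, rule fls_eqI)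
  fix x :: "'a::comm_ring_1 fls" and e
  have n: "0 < n" using quotient_of_denom_pos[OF q] .
  have "fls_nth (incl_r r x) e = (if n dvd e then [:fls_nth x (e div n):] else 0)"
    unfolding incl_r_def q prod.case
  proof (rule nth_Abs_fls_lower_bound[where N="n * fls_subdegree x"], intro allI impI)
    fix e' assume "e' < n * fls_subdegree x"
    then have "e' div n < fls_subdegree x"
      using int_le_div_iff_mult_le[OF n, of "fls_subdegree x" e'] by linarith
    then show "(if n dvd e' then [:fls_nth x (e' div n):] else 0) = 0" by simp
  qed
  then show "fls_nth (incl_r r x) e = fls_nth (fls_subst (\<lambda>a. [:a:]) n (\<lambda>_. 1) x) e"
    by (simp add: fls_nth_fls_subst_trivial[OF n comm_ring_hom_const_poly])
qed

lemma sigma_r_eq_fls_subst: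
  assumes q: "quotient_of r = (m, n)"
  shows "sigma_r r = fls_subst (\<lambda>a. [:a:]) n (sigma_w (nat m))"
proof (intro ext)
  fix x :: "'a::comm_ring_1 fls"
  have n: "0 < n" using quotient_of_denom_pos[OF q] .
  show "sigma_r r x = fls_subst (\<lambda>a. [:a:]) n (sigma_w (nat m)) x"
    unfolding sigma_r_def fls_subst_def q prod.case
  proof (intro arg_cong[where f=Abs_fls] ext sum.cong refl)
    fix e k assume "k \<in> {fls_subdegree x..e div n}"
    then have "0 \<le> e - n * k" using int_le_div_iff_mult_le[OF n] by simp
    then show "[:fls_nth x k:] * fps_nth (sigma_w (nat m) k) (nat (e - n * k))
             = [:fls_nth x k:] * fps_nth_int (sigma_w (nat m) k) (e - n * k)"
      by (simp add: fps_nth_int_def)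
  qed
qed

definition unit_power :: "'b::comm_ring_1 \<Rightarrow> 'b \<Rightarrow> int \<Rightarrow> 'b" where
  "unit_power w v k = (if 0 \<le> k then w ^ nat k else v ^ nat (- k))"

lemma unit_power_add:
  assumes wv: "w * v = 1"
  shows "unit_power w v (a + b) = unit_power w v a * unit_power w v b"
proof -
  have cancel: "w ^ p * v ^ q = (if q \<le> p then w ^ (p - q) else v ^ (q - p))" for p q :: nat
  proof (cases "q \<le> p")
    case True
    then have "w ^ p * v ^ q = w ^ (p - q) * (w * v) ^ q"
      by (simp add: power_mult_distrib mult_ac flip: power_add)
    then show ?thesis using True wv by simp
  next
    case False
    then have "v ^ q = v ^ p * v ^ (q - p)" by (simp flip: power_add)
    then have "w ^ p * v ^ q = v ^ (q - p) * (w * v) ^ p"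
      by (simp add: power_mult_distrib mult_ac)
    then show ?thesis using False wv by simp
  qed
  show ?thesis
  proof (cases "0 \<le> a"; cases "0 \<le> b")
    assume "0 \<le> a" "0 \<le> b"
    then show ?thesis by (simp add: unit_power_def nat_add_distrib power_add)
  next
    assume "0 \<le> a" "\<not> 0 \<le> b"
    then show ?thesis using cancel[of "nat a" "nat (- b)"]
      by (auto simp: unit_power_def nat_diff_distrib' intro!: arg_cong2[where f="(^)"])
  next
    assume "\<not> 0 \<le> a" "0 \<le> b"
    then show ?thesis using cancel[of "nat b" "nat (- a)"]
      by (auto simp: unit_power_def nat_diff_distrib' mult.commute intro!: arg_cong2[where f="(^)"])
  next
    assume "\<not> 0 \<le> a" "\<not> 0 \<le> b"
    then have "nat (- a - b) = nat (- a) + nat (- b)" by simp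
    with \<open>\<not> 0 \<le> a\<close> \<open>\<not> 0 \<le> b\<close> show ?thesis by (simp add: unit_power_def power_add)
  qed
qed

abbreviation u_binomial :: "nat \<Rightarrow> 'a::comm_ring_1 poly fps" where
  "u_binomial m \<equiv> 1 + fps_const [:0, 1:] * fps_X ^ m"

definition u_binomial_inverse :: "nat \<Rightarrow> 'a::comm_ring_1 poly fps" where
  "u_binomial_inverse m = Abs_fps (\<lambda>j. if m dvd j then (- [:0, 1:]) ^ (j div m) else 0)"

lemma u_binomial_times_inverse:
  assumes m: "0 < m"
  shows "u_binomial m * u_binomial_inverse m = (1 :: 'a::comm_ring_1 poly fps)"
proof (rule fps_ext)
  fix j
  have "fps_nth (u_binomial m * u_binomial_inverse m :: 'a poly fps) j
      = fps_nth (u_binomial_inverse m) j + [:0, 1:] * fps_nth (fps_X ^ m * u_binomial_inverse m) j"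
    by (simp add: distrib_right mult.assoc)
  also have "\<dots> = fps_nth (1 :: 'a poly fps) j"
  proof (cases "j < m")
    case True
    then show ?thesis using m by (auto simp: u_binomial_inverse_def fps_X_power_mult_nth dest: dvd_imp_le)
  next
    case False
    then have dvd_iff: "m dvd j \<longleftrightarrow> m dvd (j - m)" by (simp add: dvd_minus_self)
    show ?thesis
    proof (cases "m dvd j")
      case True
      then have "m dvd (j - m)" using dvd_iff by simp
      then obtain q where q: "j - m = m * q" by (rule dvdE)
      then have "j = m * Suc q" using False by simp
      then have "j div m = Suc q" "(j - m) div m = q" using q m by simp_all
      then show ?thesis using False True dvd_iff m by (simp add: u_binomial_inverse_def fps_X_power_mult_nth)
    qed (use False dvd_iff m in \<open>simp add: u_binomial_inverse_def fps_X_power_mult_nth\<close>)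
  qed
  finally show "fps_nth (u_binomial m * u_binomial_inverse m :: 'a poly fps) j = fps_nth 1 j" .
qed

lemma sigma_w_eq_unit_power: "sigma_w m k = unit_power (u_binomial m) (u_binomial_inverse m) k"
  by (simp add: sigma_w_def unit_power_def u_binomial_inverse_def)

lemma sigma_w_0: "sigma_w m 0 = 1"
  by (simp add: sigma_w_def)

lemma sigma_w_add: "0 < m \<Longrightarrow> sigma_w m (a + b) = sigma_w m a * sigma_w m b"
  unfolding sigma_w_eq_unit_power by (rule unit_power_add[OF u_binomial_times_inverse])

lemma fls_subst_hom_trivial: "0 < n \<Longrightarrow> comm_ring_hom phi \<Longrightarrow> fls_subst_hom phi n (\<lambda>_. 1)"
  by (simp add: fls_subst_hom_def)

lemma fls_subst_hom_lambda: "fls_subst_hom fls_const 1 (\<lambda>k. fps_const (fls_X_intpow k :: 'a::comm_ring_1 fls))"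
  by (simp add: fls_subst_hom_def comm_ring_hom_fls_const fls_X_intpow_times_fls_X_intpow)

lemma fls_subst_hom_sigma:
  assumes q: "quotient_of r = (m, n)" and r: "0 < r"
  shows "fls_subst_hom (\<lambda>a::'a::comm_ring_1. [:a:]) n (sigma_w (nat m))"
proof -
  have n: "0 < n" using quotient_of_denom_pos[OF q] .
  then have "0 < m" using r by (simp add: quotient_of_div[OF q] zero_less_divide_iff)
  with n show ?thesis
    by (simp add: fls_subst_hom_def comm_ring_hom_const_poly sigma_w_add sigma_w_0)
qed

lemma
  shows comm_ring_hom_incl_lambda: "comm_ring_hom (incl_lambda :: 'a::comm_ring_1 fls \<Rightarrow> _)"
    and incl_lambda_fls_const: "incl_lambda (fls_const a) = fls_const (fls_const (a :: 'a))"
proof -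
  interpret fls_subst_hom "fls_const :: 'a \<Rightarrow> _" 1 "\<lambda>_. 1"
    by (rule fls_subst_hom_trivial[OF _ comm_ring_hom_fls_const]) simp
  show "comm_ring_hom (incl_lambda :: 'a fls \<Rightarrow> _)" "incl_lambda (fls_const a) = fls_const (fls_const a)"
    by (simp_all add: incl_lambda_eq_fls_subst comm_ring_hom_fls_subst fls_subst_const)
qed

lemma
  shows comm_ring_hom_lambda_subst: "comm_ring_hom (lambda_subst :: 'a::comm_ring_1 fls \<Rightarrow> _)"
    and lambda_subst_fls_const: "lambda_subst (fls_const a) = fls_const (fls_const (a :: 'a))"
  using fls_subst_hom.comm_ring_hom_fls_subst[OF fls_subst_hom_lambda]
    fls_subst_hom.fls_subst_const[OF fls_subst_hom_lambda]
  by (simp_all add: lambda_subst_eq_fls_subst)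

lemma
  shows comm_ring_hom_incl_r: "comm_ring_hom (incl_r r :: 'a::comm_ring_1 fls \<Rightarrow> _)"
    and incl_r_fls_const: "incl_r r (fls_const a) = fls_const [:a :: 'a:]"
proof -
  obtain m n where q: "quotient_of r = (m, n)" by (cases "quotient_of r")
  interpret fls_subst_hom "\<lambda>a::'a. [:a:]" n "\<lambda>_. 1"
    by (rule fls_subst_hom_trivial[OF quotient_of_denom_pos[OF q] comm_ring_hom_const_poly])
  show "comm_ring_hom (incl_r r :: 'a fls \<Rightarrow> _)" "incl_r r (fls_const a) = fls_const [:a:]"
    by (simp_all add: incl_r_eq_fls_subst[OF q] comm_ring_hom_fls_subst fls_subst_const)
qed

lemma
  assumes "0 < r"
  shows comm_ring_hom_sigma_r: "comm_ring_hom (sigma_r r :: 'a::comm_ring_1 fls \<Rightarrow> _)"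
    and sigma_r_fls_const: "sigma_r r (fls_const a) = fls_const [:a :: 'a:]"
proof -
  obtain m n where q: "quotient_of r = (m, n)" by (cases "quotient_of r")
  interpret fls_subst_hom "\<lambda>a::'a. [:a:]" n "sigma_w (nat m)"
    by (rule fls_subst_hom_sigma[OF q assms])
  show "comm_ring_hom (sigma_r r :: 'a fls \<Rightarrow> _)" "sigma_r r (fls_const a) = fls_const [:a:]"
    by (simp_all add: sigma_r_eq_fls_subst[OF q] comm_ring_hom_fls_subst fls_subst_const)
qed

section \<open>Series in \<open>u s\<^sup>m\<close>\<close>

text \<open>\<open>f \<in> A[u][[s]]\<close> involves only monomials of the form \<open>(u s\<^sup>m)\<^sup>p\<close>; \<open>diag_coeff m f p\<close> is the
  coefficient of \<open>(u s\<^sup>m)\<^sup>p\<close>.\<close>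
definition u_homogeneous :: "nat \<Rightarrow> 'a::comm_ring_1 poly fps \<Rightarrow> bool" where
  "u_homogeneous m f \<longleftrightarrow> (\<forall>d p. coeff (fps_nth f d) p \<noteq> 0 \<longrightarrow> d = m * p)"

definition diag_coeff :: "nat \<Rightarrow> 'a::comm_ring_1 poly fps \<Rightarrow> nat \<Rightarrow> 'a" where
  "diag_coeff m f p = coeff (fps_nth f (m * p)) p"

lemma u_homogeneousD: "u_homogeneous m f \<Longrightarrow> coeff (fps_nth f d) p \<noteq> 0 \<Longrightarrow> d = m * p"
  by (auto simp: u_homogeneous_def)

lemma coeff_fps_nth_mult:
  "coeff (fps_nth (f * g) d) p
     = (\<Sum>i = 0..d. \<Sum>p1\<le>p. coeff (fps_nth f i) p1 * coeff (fps_nth g (d - i)) (p - p1))"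
  by (simp add: fps_mult_nth coeff_sum coeff_mult)

lemma u_homogeneous_mult:
  assumes f: "u_homogeneous m f" and g: "u_homogeneous m g"
  shows "u_homogeneous m (f * g)"
  unfolding u_homogeneous_def
proof (intro allI impI)
  fix d p assume "coeff (fps_nth (f * g) d) p \<noteq> 0"
  then obtain i where i: "i \<in> {0..d}"
    and nz0: "(\<Sum>p1\<le>p. coeff (fps_nth f i) p1 * coeff (fps_nth g (d - i)) (p - p1)) \<noteq> 0"
    unfolding coeff_fps_nth_mult by (rule sum.not_neutral_contains_not_neutral)
  from nz0 obtain p1 where p1: "p1 \<in> {..p}"
    and nz: "coeff (fps_nth f i) p1 * coeff (fps_nth g (d - i)) (p - p1) \<noteq> 0"
    by (rule sum.not_neutral_contains_not_neutral)
  from nz have "i = m * p1" using u_homogeneousD[OF f] by (metis mult_zero_left)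
  moreover from nz have "d - i = m * (p - p1)" using u_homogeneousD[OF g] by (metis mult_zero_right)
  ultimately have "d = m * p1 + m * (p - p1)" using i by simp
  also have "\<dots> = m * p" using p1 by (simp flip: distrib_left)
  finally show "d = m * p" .
qed

lemma u_homogeneous_one: "u_homogeneous m 1"
  by (auto simp: u_homogeneous_def)

lemma u_homogeneous_power: "u_homogeneous m f \<Longrightarrow> u_homogeneous m (f ^ k)"
  by (induction k) (simp_all add: u_homogeneous_one u_homogeneous_mult)

lemma u_homogeneous_add: "u_homogeneous m f \<Longrightarrow> u_homogeneous m g \<Longrightarrow> u_homogeneous m (f + g)"
  unfolding u_homogeneous_def by (metis add.left_neutral coeff_add fps_add_nth)

lemma u_homogeneous_sum: "(\<And>x. x \<in> S \<Longrightarrow> u_homogeneous m (f x)) \<Longrightarrow> u_homogeneous m (sum f S)"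
  by (induction S rule: infinite_finite_induct)
    (simp_all add: u_homogeneous_add, simp_all add: u_homogeneous_def)

lemma u_homogeneous_const: "u_homogeneous m (fps_const [:c:])"
  by (auto simp: u_homogeneous_def coeff_pCons' split: if_splits)

lemma u_homogeneous_u_binomial: "u_homogeneous m (u_binomial m)"
  by (auto simp: u_homogeneous_def coeff_1 coeff_pCons' split: if_splits)

lemma coeff_minus_x_power:
  "coeff ((- [:0, 1:]) ^ p :: 'a::comm_ring_1 poly) k = (if k = p then (- 1) ^ p else 0)"
proof (induction p arbitrary: k)
  case (Suc p)
  have "(- [:0, 1:]) ^ Suc p = (- pCons 0 ((- [:0, 1:]) ^ p) :: 'a poly)" by simp
  then show ?case using Suc by (cases k) auto
qed (auto simp: coeff_1)

lemma u_homogeneous_u_binomial_inverse: "u_homogeneous m (u_binomial_inverse m)"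
  unfolding u_homogeneous_def u_binomial_inverse_def
  by (auto simp: coeff_minus_x_power simp del: minus_pCons split: if_splits)

lemma u_homogeneous_sigma_w: "u_homogeneous m (sigma_w m k)"
  by (simp add: sigma_w_eq_unit_power unit_power_def u_homogeneous_power u_homogeneous_u_binomial
      u_homogeneous_u_binomial_inverse)

lemma diag_coeff_mult_eq_0:
  assumes f: "u_homogeneous m f" and z: "\<And>p. p \<le> P \<Longrightarrow> diag_coeff m f p = 0"
  shows "diag_coeff m (f * g) P = 0"
  unfolding diag_coeff_def coeff_fps_nth_mult
proof (intro sum.neutral ballI)
  fix i p assume "p \<in> {..P}"
  then show "coeff (fps_nth f i) p * coeff (fps_nth g (m * P - i)) (P - p) = 0"
    using u_homogeneousD[OF f, of i p] z[of p] by (cases "coeff (fps_nth f i) p = 0") (auto simp: diag_coeff_def)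
qed

lemma diag_coeff_sum:
  "diag_coeff m (\<Sum>j\<in>S. fps_const [:c j:] * g j) p = (\<Sum>j\<in>S. c j * diag_coeff m (g j) p)"
  by (simp add: diag_coeff_def fps_sum_nth coeff_sum)

lemma coeff_x_power: "coeff ([:0, 1:] ^ p :: 'a::comm_ring_1 poly) k = (if k = p then 1 else 0)"
proof (induction p arbitrary: k)
  case 0
  then show ?case by (simp add: coeff_1)
next
  case (Suc p)
  have "[:0, 1:] ^ Suc p = (pCons 0 ([:0, 1:] ^ p) :: 'a poly)" by simp
  then show ?case using Suc by (cases k) auto
qed

lemma diag_coeff_u_binomial_power:
  assumes m: "0 < m"
  shows "diag_coeff m (u_binomial m ^ q) p = (if p \<le> q then of_nat (q choose p) else (0::'a::comm_ring_1))"
proof -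
  let ?X = "fps_const [:0, 1:] * fps_X ^ m :: 'a poly fps"
  have X_power: "?X ^ k = fps_const ([:0, 1:] ^ k) * fps_X ^ (m * k)" for k
    by (simp add: power_mult_distrib power_mult)
  have "u_binomial m ^ q = (?X + 1) ^ q" by (simp add: add.commute)
  also have "\<dots> = (\<Sum>k\<le>q. of_nat (q choose k) * ?X ^ k * 1 ^ (q - k))" by (rule binomial_ring)
  finally have expand: "(u_binomial m :: 'a poly fps) ^ q
      = (\<Sum>k\<le>q. fps_const (of_nat (q choose k)) * (fps_const ([:0, 1:] ^ k) * fps_X ^ (m * k)))"
    by (simp add: X_power fps_of_nat)
  have "diag_coeff m (u_binomial m ^ q) p
      = coeff (\<Sum>k\<le>q. of_nat (q choose k) * (if m * p = m * k then [:0, 1:] ^ k else (0 :: 'a poly))) p"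
    unfolding diag_coeff_def expand
    by (simp add: fps_sum_nth del: fps_const_power) (intro arg_cong[where f="\<lambda>x. coeff x p"] sum.cong refl, auto)
  also have "\<dots> = coeff (\<Sum>k\<le>q. if k = p then of_nat (q choose p) * [:0, 1:] ^ p else (0 :: 'a poly)) p"
    using m by (intro arg_cong[where f="\<lambda>x. coeff x p"] sum.cong) auto
  also have "\<dots> = (if p \<le> q then of_nat (q choose p) else 0)"
    by (simp add: of_nat_poly coeff_x_power)
  finally show ?thesis .
qed

text \<open>The series \<open>(1 + u s\<^sup>m)\<^sup>j\<close> are linearly independent in a strong sense: after
  multiplying a nontrivial combination by \<open>(1 + u s\<^sup>m)\<^sup>-\<^sup>L\<close> it becomes a polynomial in \<open>u s\<^sup>m\<close>
  whose top coefficient is the coefficient \<open>c jt\<close> of the largest index \<open>jt\<close>.\<close>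
lemma diag_coeff_sigma_w_combination:
  assumes m: "0 < m" and j0: "j0 \<in> {L..U}" "c j0 \<noteq> 0"
  shows "\<exists>p \<le> nat (U - L). diag_coeff m (\<Sum>j\<in>{L..U}. fps_const [:c j:] * sigma_w m j) p \<noteq> (0::'a::comm_ring_1)"
proof -
  define F :: "'a poly fps" where "F = (\<Sum>j\<in>{L..U}. fps_const [:c j:] * sigma_w m j)"
  define jt where "jt = Max {j \<in> {L..U}. c j \<noteq> 0}"
  have "jt \<in> {j \<in> {L..U}. c j \<noteq> 0}"
    unfolding jt_def by (rule Max_in) (use j0 in \<open>auto intro: finite_subset[of _ "{L..U}"]\<close>)
  then have jt: "jt \<in> {L..U}" "c jt \<noteq> 0" by auto
  have top: "j \<le> jt" if "j \<in> {L..U}" "c j \<noteq> 0" for j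
    unfolding jt_def by (rule Max_ge) (use that in \<open>auto intro: finite_subset[of _ "{L..U}"]\<close>)
  let ?P = "nat (jt - L)"
  have "\<exists>p \<le> ?P. diag_coeff m F p \<noteq> 0"
  proof (rule ccontr)
    assume "\<not> (\<exists>p \<le> ?P. diag_coeff m F p \<noteq> 0)"
    moreover have "u_homogeneous m F"
      unfolding F_def by (intro u_homogeneous_sum u_homogeneous_mult u_homogeneous_const u_homogeneous_sigma_w)
    ultimately have "diag_coeff m (F * sigma_w m (- L)) ?P = 0"
      using diag_coeff_mult_eq_0 by blast
    moreover have "F * sigma_w m (- L) = (\<Sum>j\<in>{L..U}. fps_const [:c j:] * u_binomial m ^ nat (j - L))"
    proof -
      have "sigma_w m j * sigma_w m (- L) = (u_binomial m :: 'a poly fps) ^ nat (j - L)" if "L \<le> j" for j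
        using that by (subst sigma_w_add[OF m, symmetric]) (simp add: sigma_w_def)
      then show ?thesis
        unfolding F_def sum_distrib_right by (intro sum.cong refl) (auto simp: mult.assoc)
    qed
    moreover have "diag_coeff m (\<Sum>j\<in>{L..U}. fps_const [:c j:] * u_binomial m ^ nat (j - L)) ?P = c jt"
    proof -
      have "c j * diag_coeff m (u_binomial m ^ nat (j - L)) ?P = (if j = jt then c jt else 0)"
        if "j \<in> {L..U}" for j
        using that jt top[OF that] by (cases "c j = 0") (auto simp: diag_coeff_u_binomial_power[OF m])
      then show ?thesis
        using jt by (simp add: diag_coeff_sum)
    qed
    ultimately show False using jt by simp
  qed
  moreover have "?P \<le> nat (U - L)" using jt by (auto intro: nat_mono)
  ultimately show ?thesis
    unfolding F_def by (meson order_trans)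
qed

section \<open>Pairings of Laurent coefficients\<close>

lemma fls_nth_incl_lambda: "fls_nth (incl_lambda x) i = fls_const (fls_nth x i)"
  unfolding incl_lambda_def by (rule nth_Abs_fls_lower_bound[where N="fls_subdegree x"]) auto

lemma fls_nth_lambda_subst: "fls_nth (lambda_subst x) i = fls_shift (- i) (fls_const (fls_nth x i))"
  unfolding lambda_subst_def by (rule nth_Abs_fls_lower_bound[where N="fls_subdegree x"]) auto

lemma fls_nth_incl_lambda_times_lambda_subst:
  "fls_nth (fls_nth (incl_lambda x * lambda_subst y) k) j = fls_nth x (k - j) * fls_nth (y :: 'a::comm_ring_1 fls) j"
proof -
  define L1 where "L1 = min (fls_subdegree x) (k - j)"
  define L2 where "L2 = min (fls_subdegree y) j"
  have "fls_nth (fls_nth (incl_lambda x * lambda_subst y) k) j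
     = (\<Sum>i\<in>{L1..k - L2}. fls_nth (fls_nth (incl_lambda x) i * fls_nth (lambda_subst y) (k - i)) j)"
    by (subst fls_times_nth_bounds[where Lf=L1 and Lg=L2])
       (simp_all add: fls_nth_incl_lambda fls_nth_lambda_subst L1_def L2_def fls_nth_sum)
  also have "\<dots> = (\<Sum>i\<in>{L1..k - L2}. if i = k - j then fls_nth x (k - j) * fls_nth y j else 0)"
    by (rule sum.cong) (auto simp: fls_nth_incl_lambda fls_nth_lambda_subst)
  also have "\<dots> = fls_nth x (k - j) * fls_nth y j"
    by (simp add: L1_def L2_def)
  finally show ?thesis .
qed

lemma fls_nth_incl_r_times_sigma_r:
  assumes q: "quotient_of r = (m, n)" and r: "0 < r"
    and x: "\<And>i. i < -R \<Longrightarrow> fls_nth x i = 0" and y: "\<And>i. i < -R \<Longrightarrow> fls_nth y i = 0"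
  shows "fls_nth (incl_r r x * sigma_r r y) e
     = (\<Sum>i\<in>{-R..R + \<bar>e\<bar>}. \<Sum>j\<in>{-R..R + \<bar>e\<bar>}.
          [:fls_nth x i * fls_nth (y :: 'a::comm_ring_1 fls) j:] * fps_nth_int (sigma_w (nat m) j) (e - n * (i + j)))"
proof -
  have n: "0 < n" using quotient_of_denom_pos[OF q] .
  have "(e + R * n) div n = e div n + R"
    using n by simp
  moreover have "e div n \<le> \<bar>e\<bar>"
    using n by (smt (verit) div_by_1 pos_imp_zdiv_neg_iff zdiv_mono2)
  ultimately have U: "(e - n * (- R)) div n \<le> R + \<bar>e\<bar>" by (simp add: mult.commute)
  show ?thesis
    unfolding incl_r_eq_fls_subst[OF q] sigma_r_eq_fls_subst[OF q]
    by (subst fls_nth_fls_subst_times[OF n comm_ring_hom_const_poly x y U U]) (simp_all add: mult.commute)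
qed

lemma fls_families_lower_bound:
  fixes a b :: "nat \<Rightarrow> 'a::zero fls"
  obtains R where "\<And>l i. l < N \<Longrightarrow> i < -R \<Longrightarrow> fls_nth (a l) i = 0"
    "\<And>l i. l < N \<Longrightarrow> i < -R \<Longrightarrow> fls_nth (b l) i = 0"
proof
  define R where "R = (\<Sum>l<N. \<bar>fls_subdegree (a l)\<bar> + \<bar>fls_subdegree (b l)\<bar>)"
  have bound: "\<bar>fls_subdegree (a l)\<bar> + \<bar>fls_subdegree (b l)\<bar> \<le> R" if "l < N" for l
    unfolding R_def using that by (intro member_le_sum) auto
  show "fls_nth (a l) i = 0" "fls_nth (b l) i = 0" if "l < N" "i < -R" for l i
    using bound[OF that(1)] that(2) by (auto intro!: fls_eq0_below_subdegree)
qed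

lemma coeff_fps_nth_int_sigma_w:
  assumes n: "0 < n" and m: "0 < m"
  shows "coeff (fps_nth_int (sigma_w (nat m) j) (n * k0 + m * int p - n * (i + j))) p
       = (if i + j = k0 then diag_coeff (nat m) (sigma_w (nat m) j) p else (0::'a::comm_ring_1))"
proof (cases "i + j = k0")
  case True
  moreover have "nat (m * int p) = nat m * p" using m by (simp add: nat_mult_distrib)
  ultimately show ?thesis using m by (simp add: fps_nth_int_def diag_coeff_def)
next
  case False
  let ?d = "n * k0 + m * int p - n * (i + j)"
  have "coeff (fps_nth_int (sigma_w (nat m) j :: 'a poly fps) ?d) p = 0"
  proof (rule ccontr)
    assume nz: "coeff (fps_nth_int (sigma_w (nat m) j :: 'a poly fps) ?d) p \<noteq> 0"
    then have "0 \<le> ?d" by (cases "?d < 0") auto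
    with nz have "nat ?d = nat m * p"
      by (intro u_homogeneousD[OF u_homogeneous_sigma_w]) (simp add: fps_nth_int_def)
    then have "int (nat ?d) = int (nat m * p)" by simp
    with \<open>0 \<le> ?d\<close> m have "?d = m * int p" by simp
    then have "n * (i + j) = n * k0" by linarith
    with n False show False by simp
  qed
  with False show ?thesis by simp
qed

text \<open>For the entry \<open>(i0, j0)\<close> of \<open>g\<^sup>-\<^sup>1 g(\<lambda>t)\<close> or \<open>g\<^sup>-\<^sup>1 \<sigma>\<^sub>r(g)\<close> one takes \<open>a l = g\<^sup>-\<^sup>1(i0, l)\<close> and
  \<open>b l = g(l, j0)\<close>.\<close>
context
  fixes a b :: "nat \<Rightarrow> 'a::comm_ring_1 fls" and N :: nat
begin

definition coeff_pairing :: "int \<Rightarrow> int \<Rightarrow> 'a" where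
  "coeff_pairing i j = (\<Sum>l<N. fls_nth (a l) i * fls_nth (b l) j)"

definition lambda_entry :: "'a fls fls" where
  "lambda_entry = (\<Sum>l<N. incl_lambda (a l) * lambda_subst (b l))"

definition sigma_entry :: "rat \<Rightarrow> 'a poly fls" where
  "sigma_entry r = (\<Sum>l<N. incl_r r (a l) * sigma_r r (b l))"

lemma fls_nth_fls_nth_lambda_entry: "fls_nth (fls_nth lambda_entry k) j = coeff_pairing (k - j) j"
  by (simp add: lambda_entry_def coeff_pairing_def fls_nth_sum fls_nth_incl_lambda_times_lambda_subst)

lemma lambda_entry_in_laurent_poly_power_series_iff:
  "lambda_entry \<in> laurent_poly_power_series \<longleftrightarrow> (\<forall>i j. i + j < 0 \<longrightarrow> coeff_pairing i j = 0)"
proof -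
  obtain R where a: "\<And>l i. l < N \<Longrightarrow> i < -R \<Longrightarrow> fls_nth (a l) i = 0"
    and b: "\<And>l i. l < N \<Longrightarrow> i < -R \<Longrightarrow> fls_nth (b l) i = 0"
    using fls_families_lower_bound[where a=a and b=b and N=N] by blast
  have vanish: "fls_nth (fls_nth lambda_entry k) j = 0" if "j < -R \<or> k + R < j" for k j
  proof -
    have "j < -R \<or> k - j < -R" using that by linarith
    then show ?thesis
      using a b by (auto simp: fls_nth_fls_nth_lambda_entry coeff_pairing_def intro!: sum.neutral)
  qed
  have "{j. fls_nth (fls_nth lambda_entry k) j \<noteq> 0} \<subseteq> {-R..k + R}" for k
  proof
    fix j assume "j \<in> {j. fls_nth (fls_nth lambda_entry k) j \<noteq> 0}"
    then show "j \<in> {-R..k + R}" using vanish[where k=k and j=j] by (cases "j < -R \<or> k + R < j") auto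
  qed
  then have "finite {j. fls_nth (fls_nth lambda_entry k) j \<noteq> 0}" for k
    by (rule finite_subset) simp
  moreover have "(\<forall>k<0. fls_nth lambda_entry k = 0) \<longleftrightarrow> (\<forall>i j. i + j < 0 \<longrightarrow> coeff_pairing i j = 0)"
  proof
    assume vanish: "\<forall>k<0. fls_nth lambda_entry k = 0"
    show "\<forall>i j. i + j < 0 \<longrightarrow> coeff_pairing i j = 0"
    proof (intro allI impI)
      fix i j :: int assume "i + j < 0"
      then show "coeff_pairing i j = 0"
        using vanish fls_nth_fls_nth_lambda_entry[of "i + j" j] by simp
    qed
  next
    assume "\<forall>i j. i + j < 0 \<longrightarrow> coeff_pairing i j = 0"
    then show "\<forall>k<0. fls_nth lambda_entry k = 0"
      by (auto intro!: fls_eqI simp: fls_nth_fls_nth_lambda_entry)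
  qed
  ultimately show ?thesis
    by (simp add: laurent_poly_power_series_def)
qed

lemma fls_nth_sigma_entry:
  assumes q: "quotient_of r = (m, n)" and r: "0 < r"
    and a: "\<And>l i. l < N \<Longrightarrow> i < -R \<Longrightarrow> fls_nth (a l) i = 0"
    and b: "\<And>l i. l < N \<Longrightarrow> i < -R \<Longrightarrow> fls_nth (b l) i = 0"
  shows "fls_nth (sigma_entry r) e = (\<Sum>i\<in>{-R..R + \<bar>e\<bar>}. \<Sum>j\<in>{-R..R + \<bar>e\<bar>}.
           [:coeff_pairing i j:] * fps_nth_int (sigma_w (nat m) j) (e - n * (i + j)))"
proof -
  interpret comm_ring_hom "\<lambda>a::'a. [:a:]" by (rule comm_ring_hom_const_poly)
  let ?B = "{-R..R + \<bar>e\<bar>}"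
  have "fls_nth (sigma_entry r) e = (\<Sum>l<N. \<Sum>i\<in>?B. \<Sum>j\<in>?B.
      [:fls_nth (a l) i * fls_nth (b l) j:] * fps_nth_int (sigma_w (nat m) j) (e - n * (i + j)))"
    unfolding sigma_entry_def fls_nth_sum
    by (intro sum.cong refl fls_nth_incl_r_times_sigma_r[OF q r]) (auto simp: a b)
  also have "\<dots> = (\<Sum>i\<in>?B. \<Sum>j\<in>?B. \<Sum>l<N.
      [:fls_nth (a l) i * fls_nth (b l) j:] * fps_nth_int (sigma_w (nat m) j) (e - n * (i + j)))"
    by (subst sum.swap) (rule sum.cong[OF refl], rule sum.swap)
  finally show ?thesis
    by (simp add: coeff_pairing_def hom_sum sum_distrib_right)
qed

lemma sigma_entry_integral:
  assumes pairing: "\<And>i j. i + j < 0 \<Longrightarrow> coeff_pairing i j = 0" and r: "0 < r"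
  shows "sigma_entry r \<in> fls_integral_part"
  unfolding fls_integral_part_def
proof (intro CollectI allI impI)
  fix e :: int assume e: "e < 0"
  obtain m n where q: "quotient_of r = (m, n)" by (cases "quotient_of r")
  have n: "0 < n" using quotient_of_denom_pos[OF q] .
  obtain R where a: "\<And>l i. l < N \<Longrightarrow> i < -R \<Longrightarrow> fls_nth (a l) i = 0"
    and b: "\<And>l i. l < N \<Longrightarrow> i < -R \<Longrightarrow> fls_nth (b l) i = 0"
    using fls_families_lower_bound[where a=a and b=b and N=N] by blast
  have "[:coeff_pairing i j:] * fps_nth_int (sigma_w (nat m) j) (e - n * (i + j)) = 0" for i j
  proof (cases "i + j < 0")
    case False
    then have "0 \<le> n * (i + j)" using n by simp
    then have "e - n * (i + j) < 0" using e by linarith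
    then show ?thesis by simp
  qed (simp add: pairing)
  then show "fls_nth (sigma_entry r) e = 0"
    by (simp add: fls_nth_sigma_entry[OF q r a b])
qed

lemma coeff_sigma_entry_diag_coeff:
  assumes q: "quotient_of r = (m, n)" and r: "0 < r" and k0: "k0 < 0"
    and a: "\<And>l i. l < N \<Longrightarrow> i < -R \<Longrightarrow> fls_nth (a l) i = 0"
    and b: "\<And>l i. l < N \<Longrightarrow> i < -R \<Longrightarrow> fls_nth (b l) i = 0"
  shows "coeff (fls_nth (sigma_entry r) (n * k0 + m * int p)) p
       = diag_coeff (nat m) (\<Sum>j\<in>{-R..k0 + R}. fps_const [:coeff_pairing (k0 - j) j:] * sigma_w (nat m) j) p"
proof -
  have n: "0 < n" using quotient_of_denom_pos[OF q] .
  have m: "0 < m" using r n by (simp add: quotient_of_div[OF q] zero_less_divide_iff)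
  define e where "e = n * k0 + m * int p"
  define D where "D j = diag_coeff (nat m) (sigma_w (nat m) j :: 'a poly fps) p" for j
  let ?B = "{-R..R + \<bar>e\<bar>}"
  have pairing_below: "coeff_pairing i j = 0" if "i < -R \<or> j < -R" for i j
    using that a b by (auto simp: coeff_pairing_def)
  have "coeff (fls_nth (sigma_entry r) e) p
      = (\<Sum>i\<in>?B. \<Sum>j\<in>?B. if i + j = k0 then coeff_pairing i j * D j else 0)"
    by (simp add: fls_nth_sigma_entry[OF q r a b] coeff_sum e_def D_def
        coeff_fps_nth_int_sigma_w[OF n m] if_distrib cong: if_cong)
  also have "\<dots> = (\<Sum>j\<in>?B. if k0 - j \<in> ?B then coeff_pairing (k0 - j) j * D j else 0)"
    by (subst sum.swap) (simp add: eq_diff_eq[symmetric] sum.delta)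
  also have "\<dots> = (\<Sum>j\<in>{-R..k0 + R}. if k0 - j \<in> ?B then coeff_pairing (k0 - j) j * D j else 0)"
  proof (rule sum_int_interval_support[where a="-R" and b="k0 + R"])
    fix j assume "(if k0 - j \<in> ?B then coeff_pairing (k0 - j) j * D j else 0) \<noteq> 0"
    then have "coeff_pairing (k0 - j) j \<noteq> 0" by (auto split: if_splits)
    then show "-R \<le> j \<and> j \<le> k0 + R" using pairing_below[of "k0 - j" j] by linarith
  qed (use k0 in auto)
  also have "\<dots> = (\<Sum>j\<in>{-R..k0 + R}. coeff_pairing (k0 - j) j * D j)"
    using k0 by (intro sum.cong refl) auto
  finally show ?thesis
    by (simp add: e_def D_def diag_coeff_sum)
qed

text \<open>The \<open>p \<le> P\<close> provided by \<open>diag_coeff_sigma_w_combination\<close> does not depend on \<open>r = m/n\<close>,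
  and integrality forces \<open>n k0 + m p \<ge> 0\<close>.\<close>
lemma sigma_entry_integral_imp_lower_bound:
  assumes k0: "k0 < 0" and nz: "coeff_pairing (k0 - j0) j0 \<noteq> 0"
  obtains P :: nat where "\<And>r. 0 < r \<Longrightarrow> sigma_entry r \<in> fls_integral_part \<Longrightarrow> of_int (- k0) \<le> r * of_nat P"
proof -
  obtain R where a: "\<And>l i. l < N \<Longrightarrow> i < -R \<Longrightarrow> fls_nth (a l) i = 0"
    and b: "\<And>l i. l < N \<Longrightarrow> i < -R \<Longrightarrow> fls_nth (b l) i = 0"
    using fls_families_lower_bound[where a=a and b=b and N=N] by blast
  have j0: "j0 \<in> {-R..k0 + R}"
    using nz a[of _ "k0 - j0"] b[of _ j0] by (force simp: coeff_pairing_def not_le intro: ccontr)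
  define P where "P = nat (k0 + R - - R)"
  show ?thesis
  proof (rule that[of P])
    fix r :: rat assume r: "0 < r" and integral: "sigma_entry r \<in> fls_integral_part"
    obtain m n where q: "quotient_of r = (m, n)" by (cases "quotient_of r")
    have n: "0 < n" using quotient_of_denom_pos[OF q] .
    have m: "0 < m" using r n by (simp add: quotient_of_div[OF q] zero_less_divide_iff)
    obtain p where p: "p \<le> P" and "diag_coeff (nat m)
        (\<Sum>j\<in>{-R..k0 + R}. fps_const [:coeff_pairing (k0 - j) j:] * sigma_w (nat m) j) p \<noteq> 0"
      using diag_coeff_sigma_w_combination[OF _ j0, of "nat m" "\<lambda>j. coeff_pairing (k0 - j) j"] m nz
      unfolding P_def by auto
    then have "fls_nth (sigma_entry r) (n * k0 + m * int p) \<noteq> 0"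
      using coeff_sigma_entry_diag_coeff[OF q r k0 a b, where p=p] by auto
    then have "\<not> n * k0 + m * int p < 0"
      using integral by (auto simp: fls_integral_part_def)
    moreover have "m * int p \<le> m * int P" using p m by simp
    ultimately have "of_int (- k0 * n) \<le> (of_int (m * int P) :: rat)"
      by (simp only: of_int_le_iff) (simp add: algebra_simps)
    then show "of_int (- k0) \<le> r * of_nat P"
      using n by (simp add: quotient_of_div[OF q] field_simps)
  qed
qed

end

section \<open>The index \<open>r(g)\<close>\<close>

lemma Inf_ereal_of_rat_le_0:
  assumes "\<And>r. 0 < r \<Longrightarrow> r \<in> S"
  shows "Inf ((\<lambda>r. ereal (real_of_rat r)) ` S) \<le> 0"
  unfolding Inf_le_iff
proof (intro allI impI)
  fix y :: ereal assume y: "0 < y"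
  obtain q :: rat where "0 < q" "ereal (real_of_rat q) < y"
  proof (cases y)
    case (real x)
    with y obtain q :: rat where "0 < real_of_rat q" "real_of_rat q < x"
      using of_rat_dense[of 0 x] by auto
    with real that show thesis by simp
  next
    case PInf
    with that[of 1] show thesis by simp
  qed (use y in simp)
  then show "\<exists>a\<in>(\<lambda>r. ereal (real_of_rat r)) ` S. a < y"
    using assms by blast
qed

lemma Inf_ereal_of_rat_pos:
  assumes "0 < c" "\<And>r. r \<in> S \<Longrightarrow> c \<le> r"
  shows "0 < Inf ((\<lambda>r. ereal (real_of_rat r)) ` S)"
proof -
  have "ereal (real_of_rat c) \<le> Inf ((\<lambda>r. ereal (real_of_rat r)) ` S)"
    using assms(2) by (auto intro!: Inf_greatest simp: of_rat_less_eq)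
  moreover have "0 < ereal (real_of_rat c)" using assms(1) by simp
  ultimately show ?thesis by order
qed

lemma group_points_twisted_conj:
  assumes G: "closed_subgroup_scheme_SL N I" and g: "g \<in> group_points N I fls_const UNIV"
    and hom1: "comm_ring_hom f1" and hom2: "comm_ring_hom f2" and psi: "comm_ring_hom psi"
    and const1: "\<And>a. f1 (fls_const a) = psi a" and const2: "\<And>a. f2 (fls_const a) = psi a"
  shows "map_mat f1 (adj_mat g) * map_mat f2 g \<in> group_points N I psi UNIV"
proof -
  interpret f1: comm_ring_hom f1 by fact
  have "map_mat f1 g \<in> group_points N I psi UNIV"
    by (rule group_points_map_mat[OF hom1 g]) (simp add: const1)
  then have "map_mat f1 (adj_mat g) \<in> group_points N I psi UNIV"
    unfolding f1.hom_adj_mat[symmetric] by (rule group_points_adj_mat[OF G psi])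
  moreover have "map_mat f2 g \<in> group_points N I psi UNIV"
    by (rule group_points_map_mat[OF hom2 g]) (simp add: const2)
  ultimately show ?thesis
    by (rule group_points_mult[OF G psi])
qed

lemma index_mult_map_mat:
  assumes "A \<in> carrier_mat N N" "B \<in> carrier_mat N N" "i < N" "j < N"
  shows "(map_mat f A * map_mat h B) $$ (i, j) = (\<Sum>l<N. f (A $$ (i, l)) * h (B $$ (l, j)))"
  using assms by (simp add: scalar_prod_def atLeast0LessThan)

definition low_pairings_vanish :: "'a::comm_ring_1 fls mat \<Rightarrow> bool" where
  "low_pairings_vanish g \<longleftrightarrow> (\<forall>i0<dim_row g. \<forall>j0<dim_row g. \<forall>i j. i + j < 0 \<longrightarrow>
     coeff_pairing (\<lambda>l. adj_mat g $$ (i0, l)) (\<lambda>l. g $$ (l, j0)) (dim_row g) i j = 0)"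

context
  fixes N :: nat and I :: "'a::comm_ring_1 mpoly set" and g :: "'a fls mat"
  assumes G: "closed_subgroup_scheme_SL N I" and g: "g \<in> group_points N I fls_const UNIV"
begin

private lemma g_carrier: "g \<in> carrier_mat N N" and adj_g_carrier: "adj_mat g \<in> carrier_mat N N"
  using g adj_mat(1)[of g N] by (simp_all add: group_points_def)

lemma lambda_conj_in_iff:
  "map_mat incl_lambda (adj_mat g) * map_mat lambda_subst g
     \<in> group_points N I (\<lambda>a. fls_const (fls_const a)) laurent_poly_power_series
   \<longleftrightarrow> low_pairings_vanish g"
proof -
  have "map_mat incl_lambda (adj_mat g) * map_mat lambda_subst g
      \<in> group_points N I (\<lambda>a. fls_const (fls_const a)) UNIV"
    by (rule group_points_twisted_conj[OF G g comm_ring_hom_incl_lambda comm_ring_hom_lambda_subst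
        comm_ring_hom_comp[OF comm_ring_hom_fls_const comm_ring_hom_fls_const]])
       (simp_all add: incl_lambda_fls_const lambda_subst_fls_const)
  moreover have "(map_mat incl_lambda (adj_mat g) * map_mat lambda_subst g) $$ (i0, j0)
      = lambda_entry (\<lambda>l. adj_mat g $$ (i0, l)) (\<lambda>l. g $$ (l, j0)) N" if "i0 < N" "j0 < N" for i0 j0
    using that by (simp add: index_mult_map_mat[OF adj_g_carrier g_carrier] lambda_entry_def)
  ultimately show ?thesis
    using g_carrier by (simp add: group_points_subring[of _ N I _ laurent_poly_power_series]
        lambda_entry_in_laurent_poly_power_series_iff low_pairings_vanish_def)
qed

lemma sigma_conj_in_iff:
  assumes r: "0 < r"
  shows "map_mat (incl_r r) (adj_mat g) * map_mat (sigma_r r) g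
       \<in> group_points N I (\<lambda>a. fls_const [:a:]) fls_integral_part
     \<longleftrightarrow> (\<forall>i0<N. \<forall>j0<N. sigma_entry (\<lambda>l. adj_mat g $$ (i0, l)) (\<lambda>l. g $$ (l, j0)) N r \<in> fls_integral_part)"
proof -
  have "map_mat (incl_r r) (adj_mat g) * map_mat (sigma_r r) g \<in> group_points N I (\<lambda>a. fls_const [:a:]) UNIV"
    by (rule group_points_twisted_conj[OF G g comm_ring_hom_incl_r comm_ring_hom_sigma_r[OF r]
        comm_ring_hom_comp[OF comm_ring_hom_fls_const comm_ring_hom_const_poly]])
       (simp_all add: incl_r_fls_const sigma_r_fls_const[OF r])
  moreover have "(map_mat (incl_r r) (adj_mat g) * map_mat (sigma_r r) g) $$ (i0, j0)
      = sigma_entry (\<lambda>l. adj_mat g $$ (i0, l)) (\<lambda>l. g $$ (l, j0)) N r" if "i0 < N" "j0 < N" for i0 j0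
    using that by (simp add: index_mult_map_mat[OF adj_g_carrier g_carrier] sigma_entry_def)
  ultimately show ?thesis
    by (simp add: group_points_subring[of _ N I _ fls_integral_part])
qed

lemma low_pairings_vanish_if_integral:
  assumes "g \<in> group_points N I fls_const fls_integral_part"
  shows "low_pairings_vanish g"
proof -
  have g_int: "fls_nth (g $$ (l, j)) c = 0" if "l < N" "j < N" "c < 0" for l j c
    using assms that by (simp add: group_points_def fls_integral_part_def)
  have adj_int: "fls_nth (adj_mat g $$ (i, l)) c = 0" if "i < N" "l < N" "c < 0" for i l c
  proof -
    interpret comm_ring_hom "fps_to_fls :: 'a fps \<Rightarrow> 'a fls"
      by unfold_locales (simp_all add: fls_times_fps_to_fls)
    have "map_mat fps_to_fls (map_mat fls_regpart g) = g"
      using g_carrier g_int by (intro eq_matI) (auto intro!: fls_eqI)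
    then have "adj_mat g $$ (i, l) = fps_to_fls (adj_mat (map_mat fls_regpart g) $$ (i, l))"
      using that g_carrier adj_mat(1)[of "map_mat fls_regpart g" N] by (metis hom_adj_mat index_map_mat
          carrier_matD map_carrier_mat)
    then show ?thesis using that by simp
  qed
  have "fls_nth (adj_mat g $$ (i0, l)) i * fls_nth (g $$ (l, j0)) j = 0"
    if "i0 < N" "j0 < N" "l < N" "i + j < 0" for i0 j0 l i j
  proof (cases "i < 0")
    case False
    with that have "j < 0" by simp
    with that show ?thesis by (simp add: g_int)
  qed (simp add: that adj_int)
  then show ?thesis
    using g_carrier by (auto simp: low_pairings_vanish_def coeff_pairing_def intro!: sum.neutral)
qed

lemma sigma_conj_integral_if_low_pairings_vanish:
  assumes "low_pairings_vanish g" "0 < r"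
  shows "map_mat (incl_r r) (adj_mat g) * map_mat (sigma_r r) g
    \<in> group_points N I (\<lambda>a. fls_const [:a:]) fls_integral_part"
  using assms g_carrier
  by (auto simp: sigma_conj_in_iff low_pairings_vanish_def intro!: sigma_entry_integral)

lemma sigma_conj_integral_imp_lower_bound:
  assumes "\<not> low_pairings_vanish g"
  obtains c :: rat where "0 < c" "\<And>r. 0 < r \<Longrightarrow> map_mat (incl_r r) (adj_mat g) * map_mat (sigma_r r) g
    \<in> group_points N I (\<lambda>a. fls_const [:a:]) fls_integral_part \<Longrightarrow> c \<le> r"
proof -
  obtain i0 j0 i j where ij0: "i0 < N" "j0 < N" and k0: "i + j < 0"
    and nz: "coeff_pairing (\<lambda>l. adj_mat g $$ (i0, l)) (\<lambda>l. g $$ (l, j0)) N ((i + j) - j) j \<noteq> 0"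
    using assms g_carrier by (auto simp: low_pairings_vanish_def)
  obtain P :: nat where P: "\<And>r. 0 < r \<Longrightarrow> map_mat (incl_r r) (adj_mat g) * map_mat (sigma_r r) g
      \<in> group_points N I (\<lambda>a. fls_const [:a:]) fls_integral_part \<Longrightarrow> of_int (- (i + j)) \<le> r * of_nat P"
    using sigma_entry_integral_imp_lower_bound[OF k0 nz] ij0 sigma_conj_in_iff by metis
  show ?thesis
  proof (rule that[of "of_int (- (i + j)) / of_nat (max 1 P)"])
    fix r :: rat assume r: "0 < r"
      and integral: "map_mat (incl_r r) (adj_mat g) * map_mat (sigma_r r) g
        \<in> group_points N I (\<lambda>a. fls_const [:a:]) fls_integral_part"
    have "r * of_nat P \<le> r * of_nat (max 1 P)" using r by (intro mult_left_mono) simp_all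
    with P[OF r integral] have "of_int (- (i + j)) \<le> r * of_nat (max 1 P)" by linarith
    then show "of_int (- (i + j)) / of_nat (max 1 P) \<le> r" by (simp add: divide_le_eq)
  qed (use k0 in simp)
qed

lemma r_index_le_0_iff: "r_index N I g \<le> 0 \<longleftrightarrow> low_pairings_vanish g"
proof (cases "g \<in> group_points N I fls_const fls_integral_part")
  case True
  then show ?thesis
    using low_pairings_vanish_if_integral by (simp add: r_index_def)
next
  case False
  define S where "S = {r. 0 < r \<and> map_mat (incl_r r) (adj_mat g) * map_mat (sigma_r r) g
    \<in> group_points N I (\<lambda>a. fls_const [:a:]) fls_integral_part}"
  have r_index: "r_index N I g = Inf ((\<lambda>r. ereal (real_of_rat r)) ` S)"
    using False by (simp add: r_index_def S_def)
  show ?thesis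
  proof
    assume "low_pairings_vanish g"
    then show "r_index N I g \<le> 0"
      unfolding r_index
      by (intro Inf_ereal_of_rat_le_0) (simp add: S_def sigma_conj_integral_if_low_pairings_vanish)
  next
    assume le_0: "r_index N I g \<le> 0"
    show "low_pairings_vanish g"
    proof (rule ccontr)
      assume "\<not> low_pairings_vanish g"
      then obtain c where "0 < c" "\<And>r. r \<in> S \<Longrightarrow> c \<le> r"
        by (rule sigma_conj_integral_imp_lower_bound) (auto simp: S_def)
      then have "0 < r_index N I g"
        unfolding r_index by (rule Inf_ereal_of_rat_pos)
      with le_0 show False by simp
    qed
  qed
qed

end

theorem mainTheorem13:
  fixes N :: nat and I :: "('a::comm_ring_1) mpoly set"
  assumes "closed_subgroup_scheme_SL N I"
  shows "{g \<in> group_points N I fls_const UNIV. r_index N I g \<le> 0} =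
         {g \<in> group_points N I fls_const UNIV.
            map_mat incl_lambda (adj_mat g) * map_mat lambda_subst g
              \<in> group_points N I (\<lambda>a. fls_const (fls_const a)) laurent_poly_power_series}"
  using r_index_le_0_iff[OF assms] lambda_conj_in_iff[OF assms] by blast

end
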